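(* Let $\gamma$ be a POS, $\mu$ an extremal point of $\mathcal G(\gamma)$ and $(\Lambda_n)_{n\in\mathbb N}$ an increasing sequence of time boxes with $\bigcup_n\Lambda_n=S$. Then: (i) for every bounded local function $h$ on $\Omega$, $\gamma_{\Lambda_n}(h\mid\omega)\to\mu(h)$ for $\mu$-almost every $\omega$; (ii) if moreover $E$ is a compact metric space (with its Borel $\sigma$-algebra, $\Omega$ carrying the product topology), then there is a set of full $\mu$-measure of configurations $\omega$ such that $\gamma_{\Lambda_n}(h\mid\omega)\to\mu(h)$ as $n\to\infty$ simultaneously for all continuous local functions $h$ on $\Omega$.
   Context: $(S,\le)$ is a countable partially ordered set. For $x\in S$ write $x_-=\{y\in S:y<x\}$, $x_+=\{y\in S:y>x\}$. For $\Upsilon\subset S$: $\max(\Upsilon)=\{x\in\Upsilon: y\notin\Upsilon\text{ for all }y>x\}$, $\min(\Upsilon)=\{x\in\Upsilon: y\notin\Upsilon\text{ for all }y<x\}$, the past $\Upsilon_-=\{x\in S\setminus\Upsilon:\exists y\in\Upsilon,\ x<y\}$, the future $\Upsilon_+=\{x\in S\setminus\Upsilon:\exists y\in\Upsilon,\ x>y\}$, and the outer time $\Upsilon^*=\{x\in S: x\text{ is comparable with no }y\in\Upsilon\}$. Standing assumptions: for every $x\in S$, $\max(x_-)$ and $\min(x_+)$ are finite, every $y<x$ satisfies $y\le y_0<x$ for some $y_0\in\max(x_-)$, every $z>x$ satisfies $z\ge z_0>x$ for some $z_0\in\min(x_+)$; and $S$ has no minimal element. A finite set $\Lambda\subset S$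 is a time box if $\Lambda_-\cap\Lambda_+=\emptyset$; $\mathcal T_b$ denotes the set of time boxes. $(E,\mathcal E)$ is a measurable space, $\Omega=E^S$ with the product $\sigma$-algebra $\mathcal F$; $\mathcal F_\Upsilon$ is the $\sigma$-algebra generated by the coordinates in $\Upsilon$; a function is local if it is $\mathcal F_\Delta$-measurable for some finite $\Delta\subset S$. A proper oriented kernel on $\Lambda\in\mathcal T_b$ is a map $\gamma_\Lambda:\mathcal F_{S\setminus\Lambda_+}\times\Omega\to[0,1]$ such that (a) $\gamma_\Lambda(\cdot,\omega)$ is a probability measure for each $\omega$; (b) $\gamma_\Lambda(A,\cdot)$ is $\mathcal F_{\Lambda_-\cup\Lambda^*}$-measurable for each $A\in\mathcal F_{S\setminus\Lambda_+}$; (c) $\gamma_\Lambda(A,\cdot)$ is $\mathcal F_{\Lambda_-}$-measurable for each $A\in\mathcal F_\Lambda$; (d) $\gamma_\Lambda(B,\omega)=\mathbf 1_B(\omega)$ for all $B\in\mathcal F_{\Lambda_-\cup\Lambda^*}$. Write $\gamma_\Lambda(f\mid\omega)=\int f\,d\gamma_\Lambda(\cdot,\omega)$; compositions: $(\gamma_\Delta\gamma_\Lambda)(f\mid\omega)=\int\gamma_\Lambda(f\mid\sigma)\,\gamma_\Delta(d\sigma,\omega)$, $(\mu\gamma_\Lambda)(f)=\int\gamma_\Lambda(f\mid\sigma)\,\mu(d\sigma)$. A POS is a family $\gamma=(\gamma_\Lambda)_{\Lambda\in\mathcal T_b}$ of proper oriented kernels with $\gamma_\Delta\gamma_\Lambda=\gamma_\Delta$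 on $\mathcal F_{S\setminus\Lambda_+}$ whenever $\Lambda\subset\Delta$ are time boxes. $\mathcal G(\gamma)$ is the (convex) set of probability measures $\mu$ with $\mu\gamma_\Lambda=\mu$ on $\mathcal F_{S\setminus\Lambda_+}$ for all $\Lambda\in\mathcal T_b$. *)

theory Defs
  imports "HOL-Probability.Probability"
begin

section \<open>Order-theoretic notions on the countable poset S (= UNIV of type 's)\<close>

definition below :: "'s::order \<Rightarrow> 's set" where
  "below x = {y. y < x}"

definition above :: "'s::order \<Rightarrow> 's set" where
  "above x = {y. y > x}"

definition maxs :: "'s::order set \<Rightarrow> 's set" where
  "maxs U = {x \<in> U. \<forall>y. y > x \<longrightarrow> y \<notin> U}"

definition mins :: "'s::order set \<Rightarrow> 's set" where
  "mins U = {x \<in> U. \<forall>y. y < x \<longrightarrow> y \<notin> U}"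

definition past :: "'s::order set \<Rightarrow> 's set" where
  "past U = {x. x \<notin> U \<and> (\<exists>y\<in>U. x < y)}"

definition future :: "'s::order set \<Rightarrow> 's set" where
  "future U = {x. x \<notin> U \<and> (\<exists>y\<in>U. x > y)}"

definition outer :: "'s::order set \<Rightarrow> 's set" where
  "outer U = {x. \<forall>y\<in>U. \<not> (x \<le> y \<or> y \<le> x)}"

definition standing_poset :: "'s::order itself \<Rightarrow> bool" where
  "standing_poset _ \<longleftrightarrow>
     countable (UNIV :: 's set) \<and>
     (\<forall>x::'s. finite (maxs (below x)) \<and> finite (mins (above x)) \<and>
        (\<forall>y. y < x \<longrightarrow> (\<exists>y0 \<in> maxs (below x). y \<le> y0 \<and> y0 < x)) \<and>
        (\<forall>z. z > x \<longrightarrow> (\<exists>z0 \<in> mins (above x). z \<ge> z0 \<and> z0 > x))) \<and>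
     (\<forall>x::'s. \<exists>y. y < x)"

definition time_box :: "'s::order set \<Rightarrow> bool" where
  "time_box L \<longleftrightarrow> finite L \<and> past L \<inter> future L = {}"

definition Conf :: "'e measure \<Rightarrow> ('s \<Rightarrow> 'e) measure" where
  "Conf M = PiM UNIV (\<lambda>_. M)"

definition Fsub :: "'e measure \<Rightarrow> 's set \<Rightarrow> ('s \<Rightarrow> 'e) measure" where
  "Fsub M U = sigma (space (Conf M))
      (\<Union>x\<in>U. {(\<lambda>\<omega>. \<omega> x) -` A \<inter> space (Conf M) | A. A \<in> sets M})"

definition local_fun :: "'e measure \<Rightarrow> (('s \<Rightarrow> 'e) \<Rightarrow> real) \<Rightarrow> bool" where
  "local_fun M h \<longleftrightarrow> (\<exists>D. finite D \<and> h \<in> borel_measurable (Fsub M D))"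

definition bounded_fun :: "'e measure \<Rightarrow> (('s \<Rightarrow> 'e) \<Rightarrow> real) \<Rightarrow> bool" where
  "bounded_fun M h \<longleftrightarrow> (\<exists>B. \<forall>\<omega>\<in>space (Conf M). \<bar>h \<omega>\<bar> \<le> B)"

text \<open>A kernel on L is represented as a map \<omega> \<mapsto> \<gamma>_L(\<cdot>,\<omega>), a measure on F_{S\<setminus>L_+}.
  Then \<gamma>_L(A,\<omega>) = measure (g \<omega>) A.\<close>
definition proper_oriented_kernel ::
  "'e measure \<Rightarrow> 's::order set \<Rightarrow> (('s \<Rightarrow> 'e) \<Rightarrow> ('s \<Rightarrow> 'e) measure) \<Rightarrow> bool" where
  "proper_oriented_kernel M L g \<longleftrightarrow>
     (\<forall>\<omega>\<in>space (Conf M). prob_space (g \<omega>) \<and> sets (g \<omega>) = sets (Fsub M (- future L))) \<and>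
     (\<forall>A \<in> sets (Fsub M (- future L)).
        (\<lambda>\<omega>. measure (g \<omega>) A) \<in> borel_measurable (Fsub M (past L \<union> outer L))) \<and>
     (\<forall>A \<in> sets (Fsub M L).
        (\<lambda>\<omega>. measure (g \<omega>) A) \<in> borel_measurable (Fsub M (past L))) \<and>
     (\<forall>B \<in> sets (Fsub M (past L \<union> outer L)). \<forall>\<omega>\<in>space (Conf M).
        measure (g \<omega>) B = indicator B \<omega>)"

text \<open>Consistency \<gamma>_D \<gamma>_L = \<gamma>_D on F_{S\<setminus>L_+}, required for those events for which
  both sides are defined.\<close>
definition POS :: "'e measure \<Rightarrow> ('s::order set \<Rightarrow> ('s \<Rightarrow> 'e) \<Rightarrow> ('s \<Rightarrow> 'e) measure) \<Rightarrow> bool" where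
  "POS M \<gamma> \<longleftrightarrow>
     (\<forall>L. time_box L \<longrightarrow> proper_oriented_kernel M L (\<gamma> L)) \<and>
     (\<forall>L D. time_box L \<longrightarrow> time_box D \<longrightarrow> L \<subseteq> D \<longrightarrow>
        (\<forall>A \<in> sets (Fsub M (- future L)). \<forall>\<omega>\<in>space (Conf M).
           A \<in> sets (Fsub M (- future D)) \<longrightarrow>
           (\<lambda>\<sigma>. measure (\<gamma> L \<sigma>) A) \<in> borel_measurable (Fsub M (- future D)) \<longrightarrow>
           (\<integral>\<sigma>. measure (\<gamma> L \<sigma>) A \<partial>(\<gamma> D \<omega>)) = measure (\<gamma> D \<omega>) A))"

definition Gibbs :: "'e measure \<Rightarrow> ('s::order set \<Rightarrow> ('s \<Rightarrow> 'e) \<Rightarrow> ('s \<Rightarrow> 'e) measure)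
    \<Rightarrow> ('s \<Rightarrow> 'e) measure \<Rightarrow> bool" where
  "Gibbs M \<gamma> \<mu> \<longleftrightarrow> prob_space \<mu> \<and> sets \<mu> = sets (Conf M) \<and>
     (\<forall>L. time_box L \<longrightarrow> (\<forall>A \<in> sets (Fsub M (- future L)).
        (\<integral>\<omega>. measure (\<gamma> L \<omega>) A \<partial>\<mu>) = measure \<mu> A))"

definition extremal_Gibbs :: "'e measure \<Rightarrow> ('s::order set \<Rightarrow> ('s \<Rightarrow> 'e) \<Rightarrow> ('s \<Rightarrow> 'e) measure)
    \<Rightarrow> ('s \<Rightarrow> 'e) measure \<Rightarrow> bool" where
  "extremal_Gibbs M \<gamma> \<mu> \<longleftrightarrow> Gibbs M \<gamma> \<mu> \<and>
     (\<forall>\<nu>1 \<nu>2 (t::real). Gibbs M \<gamma> \<nu>1 \<longrightarrow> Gibbs M \<gamma> \<nu>2 \<longrightarrow> 0 < t \<longrightarrow> t < 1 \<longrightarrow>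
        (\<forall>A \<in> sets (Conf M). measure \<mu> A = t * measure \<nu>1 A + (1 - t) * measure \<nu>2 A) \<longrightarrow>
        (\<forall>A \<in> sets (Conf M). measure \<nu>1 A = measure \<mu> A \<and> measure \<nu>2 A = measure \<mu> A))"

end

theory Submission
  imports Defs
begin

text \<open>
  Part (i) is a reverse martingale argument.  The kernel \<gamma>_L is a version of the
  conditional expectation of \<mu> given the coordinates in the past and outer time of L;
  these sigma-algebras decrease along (\<Lambda>_n), so \<gamma>_{\<Lambda>_n}(h|\<cdot>) is a bounded reverse
  martingale, which converges almost surely (by Doob's L2 maximal inequality) to a
  tail-measurable limit.  Extremality of \<mu> makes the tail trivial, so the limit is \<mu>(h).
  Part (ii) applies (i) to the countably many indicators of cylinder sets built from
  finite partitions of the compact space E into small cells, and approximates every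
  continuous local function uniformly by linear combinations of them.
\<close>

definition coord_gens :: "'e measure \<Rightarrow> 's set \<Rightarrow> ('s \<Rightarrow> 'e) set set" where
  "coord_gens M U = (\<Union>x\<in>U. {(\<lambda>\<omega>. \<omega> x) -` A \<inter> space (Conf M) | A. A \<in> sets M})"

lemma sets_Fsub: "sets (Fsub M U) = sigma_sets (space (Conf M)) (coord_gens M U)"
  unfolding Fsub_def coord_gens_def[symmetric] by (rule sets_measure_of) (auto simp: coord_gens_def)

lemma space_Fsub [simp]: "space (Fsub M U) = space (Conf M)"
  unfolding Fsub_def coord_gens_def[symmetric] by (rule space_measure_of) (auto simp: coord_gens_def)

lemma space_Conf: "space (Conf M) = (\<Pi>\<^sub>E x\<in>UNIV. space M)"
  unfolding Conf_def by (simp add: space_PiM)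

lemma coord_gens_in_Conf: "coord_gens M U \<subseteq> sets (Conf M)"
proof
  fix G assume "G \<in> coord_gens M U"
  then obtain x A where G: "G = (\<lambda>\<omega>. \<omega> x) -` A \<inter> space (Conf M)" "A \<in> sets M"
    unfolding coord_gens_def by auto
  have "(\<lambda>\<omega>. \<omega> x) \<in> measurable (Conf M) M"
    unfolding Conf_def by (rule measurable_component_singleton) simp
  then show "G \<in> sets (Conf M)" using G measurable_sets by blast
qed

lemma sets_Fsub_Conf: "sets (Fsub M U) \<subseteq> sets (Conf M)"
  unfolding sets_Fsub by (rule sets.sigma_sets_subset[OF coord_gens_in_Conf])

lemma sets_Fsub_mono: "U \<subseteq> V \<Longrightarrow> sets (Fsub M U) \<subseteq> sets (Fsub M V)"
  unfolding sets_Fsub coord_gens_def by (rule sigma_sets_mono') auto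

lemma subalgebra_Fsub: "sets \<mu> = sets (Conf M) \<Longrightarrow> subalgebra \<mu> (Fsub M U)"
  unfolding subalgebra_def using sets_Fsub_Conf[of M U] sets_eq_imp_space_eq[of \<mu> "Conf M"] by auto

lemma measurable_Fsub_mono:
  "U \<subseteq> V \<Longrightarrow> f \<in> measurable (Fsub M U) N \<Longrightarrow> f \<in> measurable (Fsub M V) N"
  by (rule measurable_from_subalg) (auto simp: subalgebra_def sets_Fsub_mono)

lemma Fsub_measurable_depends_on:
  fixes h :: "('s \<Rightarrow> 'e) \<Rightarrow> real"
  assumes h: "h \<in> borel_measurable (Fsub M D)"
    and \<sigma>: "\<sigma> \<in> space (Conf M)" and \<tau>: "\<tau> \<in> space (Conf M)"
    and agree: "\<And>x. x \<in> D \<Longrightarrow> \<sigma> x = \<tau> x"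
  shows "h \<sigma> = h \<tau>"
proof -
  have same_sets: "\<sigma> \<in> G \<longleftrightarrow> \<tau> \<in> G" if "G \<in> sets (Fsub M D)" for G
    using that unfolding sets_Fsub
  proof induction
    case (Basic G)
    then obtain x A where "x \<in> D" "G = (\<lambda>\<omega>. \<omega> x) -` A \<inter> space (Conf M)"
      unfolding coord_gens_def by auto
    then show ?case using agree \<sigma> \<tau> by auto
  qed (use \<sigma> \<tau> in auto)
  have [measurable]: "h \<in> borel_measurable (Fsub M D)" by (rule h)
  have "{\<rho>\<in>space (Fsub M D). h \<rho> = h \<sigma>} \<in> sets (Fsub M D)" by measurable
  from same_sets[OF this] show ?thesis using \<sigma> \<tau> by simp
qed

text \<open>This is what makes the
  boundary sigma-algebras along an increasing sequence of time boxes decrease.\<close>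
lemma past_outer_antimono:
  assumes D: "time_box D" and LD: "L \<subseteq> D"
  shows "past D \<union> outer D \<subseteq> past L \<union> outer L"
proof
  fix x assume x: "x \<in> past D \<union> outer D"
  then have xD: "x \<notin> D" unfolding past_def outer_def by auto
  show "x \<in> past L \<union> outer L"
  proof (cases "\<exists>y\<in>L. x < y")
    case True then show ?thesis using xD LD unfolding past_def by auto
  next
    case no_above: False
    show ?thesis
    proof (cases "\<exists>y\<in>L. y < x")
      case True
      then obtain y where y: "y \<in> L" "y < x" by auto
      then have "x \<in> future D" using xD LD unfolding future_def by auto
      moreover have "x \<notin> outer D" using y LD unfolding outer_def by (auto intro: less_imp_le)
      ultimately show ?thesis using x D unfolding time_box_def by auto
    next
      case False
      then show ?thesis using no_above xD LD unfolding outer_def by (auto simp: le_less)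
    qed
  qed
qed

lemma past_outer_subset: "time_box L \<Longrightarrow> past L \<union> outer L \<subseteq> - future L"
  unfolding time_box_def past_def outer_def future_def by auto

lemma subset_not_future: "D \<subseteq> L \<Longrightarrow> D \<subseteq> - future L"
  unfolding future_def by auto

lemma finite_subset_eventually:
  assumes "finite D" "incseq Lam" "(\<Union>n. Lam n) = UNIV"
  shows "\<exists>n0. \<forall>n\<ge>n0. D \<subseteq> Lam n"
proof -
  have "\<exists>n. D \<subseteq> Lam n"
    using assms(1)
  proof induction
    case (insert x D)
    then obtain n where "D \<subseteq> Lam n" by auto
    moreover obtain m where "x \<in> Lam m" using assms(3) by auto
    ultimately have "insert x D \<subseteq> Lam (max n m)"
      using assms(2) unfolding incseq_def by (meson insert_subset max.cobounded1 max.cobounded2 subset_iff)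
    then show ?case by blast
  qed simp
  then show ?thesis using assms(2) unfolding incseq_def by blast
qed

section \<open>Almost sure convergence of bounded reverse martingales\<close>

lemma lim_shift: "lim (\<lambda>i. f (i + N)) = (lim f :: real)"
proof -
  have "(\<lambda>L. (\<lambda>i. f (i + N)) \<longlonglongrightarrow> L) = (\<lambda>L. f \<longlonglongrightarrow> L)"
    using LIMSEQ_ignore_initial_segment LIMSEQ_offset by (intro ext iffI) blast+
  then show ?thesis unfolding lim_def by simp
qed

text \<open>A decreasing sequence of sub-sigma-algebras F n of a probability space M and
  bounded F n-measurable X n that represent the conditional expectation of a function h
  given F n, in the weak form \<open>\<integral> f X_n = \<integral> f h\<close> for bounded F n-measurable f.\<close>
locale bounded_reverse_martingale = prob_space M for M :: "'a measure" +
  fixes F :: "nat \<Rightarrow> 'a measure" and X :: "nat \<Rightarrow> 'a \<Rightarrow> real" and h :: "'a \<Rightarrow> real" and B :: real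
  assumes subalg: "\<And>n. subalgebra M (F n)"
    and decreasing: "\<And>n m. n \<le> m \<Longrightarrow> sets (F m) \<subseteq> sets (F n)"
    and X_measurable: "\<And>n. X n \<in> borel_measurable (F n)"
    and X_bounded: "\<And>n \<omega>. \<omega> \<in> space M \<Longrightarrow> \<bar>X n \<omega>\<bar> \<le> B"
    and cond_exp: "\<And>n f C. f \<in> borel_measurable (F n) \<Longrightarrow> (\<And>\<omega>. \<omega> \<in> space M \<Longrightarrow> \<bar>f \<omega>\<bar> \<le> C) \<Longrightarrow>
            (\<integral>\<omega>. f \<omega> * X n \<omega> \<partial>M) = (\<integral>\<omega>. f \<omega> * h \<omega> \<partial>M)"
    and tail_trivial: "\<And>A. (\<And>n. A \<in> sets (F n)) \<Longrightarrow> prob A = 0 \<or> prob A = 1"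
begin

definition bdd :: "('a \<Rightarrow> real) \<Rightarrow> bool" where
  "bdd f \<longleftrightarrow> f \<in> borel_measurable M \<and> (\<exists>C. \<forall>\<omega>\<in>space M. \<bar>f \<omega>\<bar> \<le> C)"

lemma bdd_integrable: assumes "bdd f" shows "integrable M f"
proof -
  obtain C where "f \<in> borel_measurable M" "\<forall>\<omega>\<in>space M. \<bar>f \<omega>\<bar> \<le> C"
    using assms unfolding bdd_def by auto
  then show ?thesis by (intro integrable_const_bound[where B=C] AE_I2) auto
qed

lemma bdd_mult: assumes "bdd f" "bdd g" shows "bdd (\<lambda>x. f x * g x)"
proof -
  obtain C1 C2 where "\<forall>\<omega>\<in>space M. \<bar>f \<omega>\<bar> \<le> C1" "\<forall>\<omega>\<in>space M. \<bar>g \<omega>\<bar> \<le> C2"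
    using assms unfolding bdd_def by auto
  then have "\<forall>\<omega>\<in>space M. \<bar>f \<omega> * g \<omega>\<bar> \<le> C1 * C2"
    by (simp add: abs_mult mult_mono')
  then show ?thesis using assms unfolding bdd_def by auto
qed

lemma bdd_diff: assumes "bdd f" "bdd g" shows "bdd (\<lambda>x. f x - g x)"
proof -
  obtain C1 C2 where "\<forall>\<omega>\<in>space M. \<bar>f \<omega>\<bar> \<le> C1" "\<forall>\<omega>\<in>space M. \<bar>g \<omega>\<bar> \<le> C2"
    using assms unfolding bdd_def by auto
  then have "\<forall>\<omega>\<in>space M. \<bar>f \<omega> - g \<omega>\<bar> \<le> C1 + C2"
    by (smt (verit))
  then show ?thesis using assms unfolding bdd_def by auto
qed

lemma bdd_const: "bdd (\<lambda>x. c)"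
  unfolding bdd_def by auto

lemma bdd_indicator: "A \<in> sets M \<Longrightarrow> bdd (indicator A)"
  unfolding bdd_def by (auto intro!: exI[of _ 1] simp: indicator_def)

lemma space_F [simp]: "space (F n) = space M"
  using subalg[of n] unfolding subalgebra_def by auto

lemma sets_F: "sets (F n) \<subseteq> sets M"
  using subalg[of n] unfolding subalgebra_def by auto

lemma measurable_F_M: "f \<in> borel_measurable (F n) \<Longrightarrow> f \<in> borel_measurable M"
  using measurable_from_subalg[OF subalg] by blast

lemma measurable_F_mono: "n \<le> m \<Longrightarrow> f \<in> borel_measurable (F m) \<Longrightarrow> f \<in> borel_measurable (F n)"
  by (rule measurable_from_subalg[of "F n" "F m"]) (auto simp: subalgebra_def decreasing)

lemma X_measurable_M [measurable]: "X n \<in> borel_measurable M"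
  using measurable_F_M[OF X_measurable] .

lemma bdd_X: "bdd (X n)"
  unfolding bdd_def using X_bounded by auto

lemma cond_exp_shift:
  assumes "n \<le> m" "f \<in> borel_measurable (F m)" "\<And>\<omega>. \<omega> \<in> space M \<Longrightarrow> \<bar>f \<omega>\<bar> \<le> C"
  shows "(\<integral>\<omega>. f \<omega> * X n \<omega> \<partial>M) = (\<integral>\<omega>. f \<omega> * X m \<omega> \<partial>M)"
  using cond_exp[OF measurable_F_mono[OF assms(1,2)] assms(3)] cond_exp[OF assms(2,3)] by simp

lemma weighted_L2_projection_le:
  assumes "bdd u" "bdd v" "bdd w" and proj: "(\<integral>\<omega>. w \<omega> * u \<omega> * v \<omega> \<partial>M) = (\<integral>\<omega>. w \<omega> * u \<omega> * u \<omega> \<partial>M)"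
    and w_nonneg: "\<And>\<omega>. \<omega> \<in> space M \<Longrightarrow> 0 \<le> w \<omega>"
  shows "(\<integral>\<omega>. w \<omega> * (u \<omega>)\<^sup>2 \<partial>M) \<le> (\<integral>\<omega>. w \<omega> * (v \<omega>)\<^sup>2 \<partial>M)"
proof -
  have ints: "integrable M (\<lambda>\<omega>. w \<omega> * u \<omega> * v \<omega>)" "integrable M (\<lambda>\<omega>. w \<omega> * u \<omega> * u \<omega>)"
    "integrable M (\<lambda>\<omega>. w \<omega> * v \<omega> * v \<omega>)"
    using assms by (auto intro!: bdd_integrable bdd_mult)
  have "0 \<le> (\<integral>\<omega>. w \<omega> * (v \<omega> - u \<omega>)\<^sup>2 \<partial>M)"
    using w_nonneg by (intro Bochner_Integration.integral_nonneg) auto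
  also have "\<dots> = (\<integral>\<omega>. (w \<omega> * v \<omega> * v \<omega> + w \<omega> * u \<omega> * u \<omega>) - 2 * (w \<omega> * u \<omega> * v \<omega>) \<partial>M)"
    by (rule Bochner_Integration.integral_cong) (auto simp: power2_eq_square algebra_simps)
  also have "\<dots> = (\<integral>\<omega>. w \<omega> * v \<omega> * v \<omega> \<partial>M) - (\<integral>\<omega>. w \<omega> * u \<omega> * u \<omega> \<partial>M)"
    using ints proj by simp
  finally show ?thesis by (simp add: power2_eq_square mult.assoc)
qed

definition energy :: "nat \<Rightarrow> real" where "energy n = (\<integral>\<omega>. (X n \<omega>)\<^sup>2 \<partial>M)"

lemma increment_L2:
  assumes "n \<le> m"
  shows "(\<integral>\<omega>. (X n \<omega> - X m \<omega>)\<^sup>2 \<partial>M) = energy n - energy m"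
proof -
  have cross: "(\<integral>\<omega>. X m \<omega> * X n \<omega> \<partial>M) = (\<integral>\<omega>. X m \<omega> * X m \<omega> \<partial>M)"
    using cond_exp_shift[OF assms X_measurable X_bounded] .
  have ints: "integrable M (\<lambda>\<omega>. X m \<omega> * X n \<omega>)" "integrable M (\<lambda>\<omega>. X m \<omega> * X m \<omega>)"
    "integrable M (\<lambda>\<omega>. X n \<omega> * X n \<omega>)"
    by (auto intro!: bdd_integrable bdd_mult bdd_X)
  have "(\<integral>\<omega>. (X n \<omega> - X m \<omega>)\<^sup>2 \<partial>M)
      = (\<integral>\<omega>. (X n \<omega> * X n \<omega> + X m \<omega> * X m \<omega>) - 2 * (X m \<omega> * X n \<omega>) \<partial>M)"
    by (rule Bochner_Integration.integral_cong) (auto simp: power2_eq_square algebra_simps)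
  also have "\<dots> = (\<integral>\<omega>. X n \<omega> * X n \<omega> \<partial>M) - (\<integral>\<omega>. X m \<omega> * X m \<omega> \<partial>M)"
    using ints cross by simp
  finally show ?thesis unfolding energy_def by (simp add: power2_eq_square)
qed

lemma energy_nonneg: "0 \<le> energy n"
  unfolding energy_def by (intro Bochner_Integration.integral_nonneg) auto

lemma energy_decseq: "decseq energy"
proof (rule decseq_SucI)
  fix n
  have "0 \<le> (\<integral>\<omega>. (X n \<omega> - X (Suc n) \<omega>)\<^sup>2 \<partial>M)" by (intro Bochner_Integration.integral_nonneg) auto
  then show "energy (Suc n) \<le> energy n" using increment_L2[of n "Suc n"] by simp
qed

lemma increment_L2_on_event:
  assumes "N \<le> n" "n \<le> K" "A \<in> sets (F n)"
  shows "(\<integral>\<omega>. indicator A \<omega> * (X n \<omega> - X K \<omega>)\<^sup>2 \<partial>M)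
       \<le> (\<integral>\<omega>. indicator A \<omega> * (X N \<omega> - X K \<omega>)\<^sup>2 \<partial>M)"
proof -
  have A: "A \<in> sets M" using assms(3) sets_F by auto
  have [measurable]: "X K \<in> borel_measurable (F n)" "X n \<in> borel_measurable (F n)"
    using measurable_F_mono[OF assms(2) X_measurable] X_measurable by auto
  define g where "g \<omega> = indicator A \<omega> * (X n \<omega> - X K \<omega>)" for \<omega>
  have g_meas: "g \<in> borel_measurable (F n)" unfolding g_def using assms(3) by measurable
  have g_bounded: "\<bar>g \<omega>\<bar> \<le> 2 * B" if "\<omega> \<in> space M" for \<omega>
    using X_bounded[OF that, of n] X_bounded[OF that, of K] unfolding g_def
    by (auto simp: indicator_def)
  have bdd_g: "bdd g" unfolding bdd_def using g_bounded measurable_F_M[OF g_meas] by auto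
  have ints: "integrable M (\<lambda>\<omega>. g \<omega> * X N \<omega>)" "integrable M (\<lambda>\<omega>. g \<omega> * X n \<omega>)"
     "integrable M (\<lambda>\<omega>. g \<omega> * X K \<omega>)"
    by (auto intro!: bdd_integrable bdd_mult bdd_g bdd_X)
  have "(\<integral>\<omega>. g \<omega> * (X N \<omega> - X K \<omega>) \<partial>M) = (\<integral>\<omega>. g \<omega> * X N \<omega> \<partial>M) - (\<integral>\<omega>. g \<omega> * X K \<omega> \<partial>M)"
    using ints by (simp add: right_diff_distrib)
  also have "\<dots> = (\<integral>\<omega>. g \<omega> * X n \<omega> \<partial>M) - (\<integral>\<omega>. g \<omega> * X K \<omega> \<partial>M)"
    using cond_exp_shift[OF assms(1) g_meas g_bounded] by simp
  also have "\<dots> = (\<integral>\<omega>. g \<omega> * (X n \<omega> - X K \<omega>) \<partial>M)"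
    using ints by (simp add: right_diff_distrib)
  finally have "(\<integral>\<omega>. indicator A \<omega> * (X n \<omega> - X K \<omega>) * (X N \<omega> - X K \<omega>) \<partial>M)
      = (\<integral>\<omega>. indicator A \<omega> * (X n \<omega> - X K \<omega>) * (X n \<omega> - X K \<omega>) \<partial>M)"
    unfolding g_def .
  then show ?thesis
    by (rule weighted_L2_projection_le[rotated 3]) (auto intro!: bdd_diff bdd_X bdd_indicator A)
qed

definition exceed :: "real \<Rightarrow> nat \<Rightarrow> nat \<Rightarrow> 'a set" where
  "exceed \<delta> K n = {\<omega>\<in>space M. \<exists>j\<in>{n..K}. \<delta> \<le> \<bar>X j \<omega> - X K \<omega>\<bar>}"

lemma exceed_sets: assumes "n \<le> K" shows "exceed \<delta> K n \<in> sets (F n)"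
proof -
  have "exceed \<delta> K n = (\<Union>j\<in>{n..K}. {\<omega>\<in>space (F n). \<delta> \<le> \<bar>X j \<omega> - X K \<omega>\<bar>})"
    unfolding exceed_def by auto
  also have "\<dots> \<in> sets (F n)"
  proof (rule sets.finite_UN)
    fix j assume "j \<in> {n..K}"
    then have [measurable]: "X j \<in> borel_measurable (F n)" "X K \<in> borel_measurable (F n)"
      using measurable_F_mono[OF _ X_measurable] assms by auto
    show "{\<omega>\<in>space (F n). \<delta> \<le> \<bar>X j \<omega> - X K \<omega>\<bar>} \<in> sets (F n)" by measurable
  qed auto
  finally show ?thesis .
qed

lemma exceed_sets_M: "n \<le> K \<Longrightarrow> exceed \<delta> K n \<in> sets M"
  using exceed_sets sets_F by blast

lemma last_exit_bound:
  assumes "N \<le> n" "n < K" "0 < \<delta>"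
  defines "A \<equiv> exceed \<delta> K n - exceed \<delta> K (Suc n)"
  shows "\<delta>\<^sup>2 * prob A \<le> (\<integral>\<omega>. indicator A \<omega> * (X N \<omega> - X K \<omega>)\<^sup>2 \<partial>M)"
proof -
  have A_F: "A \<in> sets (F n)"
    using exceed_sets[of n K] exceed_sets[of "Suc n" K] decreasing[of n "Suc n"] assms(2)
    unfolding A_def by auto
  then have A: "A \<in> sets M" using sets_F by auto
  have far: "\<delta>\<^sup>2 \<le> (X n \<omega> - X K \<omega>)\<^sup>2" if "\<omega> \<in> A" for \<omega>
  proof -
    have "\<delta> \<le> \<bar>X n \<omega> - X K \<omega>\<bar>" using that unfolding A_def exceed_def by (auto simp: Suc_le_eq)
    from power_mono[OF this, of 2] show ?thesis using assms(3) by simp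
  qed
  have "\<delta>\<^sup>2 * prob A = (\<integral>\<omega>. indicator A \<omega> * \<delta>\<^sup>2 \<partial>M)"
    using A by simp
  also have "\<dots> \<le> (\<integral>\<omega>. indicator A \<omega> * (X n \<omega> - X K \<omega>)\<^sup>2 \<partial>M)"
    using A far unfolding power2_eq_square
    by (intro integral_mono bdd_integrable bdd_mult bdd_indicator bdd_diff bdd_X bdd_const)
       (auto simp: indicator_def)
  also have "\<dots> \<le> (\<integral>\<omega>. indicator A \<omega> * (X N \<omega> - X K \<omega>)\<^sup>2 \<partial>M)"
    using increment_L2_on_event[OF assms(1) _ A_F] assms(2) by simp
  finally show ?thesis .
qed

text \<open>Doob's decomposition by the last time X j is \<delta>-far from X K, as a backward
  induction from K: the event exceed n is the disjoint union of the last-exit event at n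
  and exceed (n+1).\<close>
lemma exceed_bound:
  assumes "N \<le> n" "n \<le> K" "0 < \<delta>"
  shows "\<delta>\<^sup>2 * prob (exceed \<delta> K n) \<le> (\<integral>\<omega>. indicator (exceed \<delta> K n) \<omega> * (X N \<omega> - X K \<omega>)\<^sup>2 \<partial>M)"
  using assms(2,1)
proof (induction n rule: inc_induct)
  case base
  have "exceed \<delta> K K = {}" unfolding exceed_def using assms(3) by auto
  then show ?case by simp
next
  case (step n)
  define Y where "Y \<omega> = (X N \<omega> - X K \<omega>)\<^sup>2" for \<omega>
  define A where "A = exceed \<delta> K n - exceed \<delta> K (Suc n)"
  have split: "exceed \<delta> K n = A \<union> exceed \<delta> K (Suc n)" "A \<inter> exceed \<delta> K (Suc n) = {}"
    using step.hyps unfolding A_def exceed_def by (auto simp: Suc_le_eq)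
  have sets: "A \<in> sets M" "exceed \<delta> K (Suc n) \<in> sets M"
    using exceed_sets_M step.hyps unfolding A_def by auto
  have "prob (exceed \<delta> K n) = prob A + prob (exceed \<delta> K (Suc n))"
    using split sets by (simp add: finite_measure_Union)
  moreover have "(\<integral>\<omega>. indicator (exceed \<delta> K n) \<omega> * Y \<omega> \<partial>M)
      = (\<integral>\<omega>. indicator A \<omega> * Y \<omega> \<partial>M) + (\<integral>\<omega>. indicator (exceed \<delta> K (Suc n)) \<omega> * Y \<omega> \<partial>M)"
  proof -
    have "indicator (exceed \<delta> K n) \<omega> * Y \<omega> = indicator A \<omega> * Y \<omega> + indicator (exceed \<delta> K (Suc n)) \<omega> * Y \<omega>" for \<omega>
      using split by (auto simp: indicator_def)
    then show ?thesis
      using sets unfolding Y_def power2_eq_square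
      by (simp add: bdd_integrable bdd_mult bdd_indicator bdd_diff bdd_X)
  qed
  ultimately show ?case
    using last_exit_bound[OF step.prems step.hyps(2) assms(3)] step.IH step.prems
    unfolding Y_def A_def by (simp add: distrib_left)
qed

lemma maximal_inequality:
  assumes "N \<le> K" "0 < \<delta>"
  shows "\<delta>\<^sup>2 * prob (exceed \<delta> K N) \<le> energy N - energy K"
proof -
  have "\<delta>\<^sup>2 * prob (exceed \<delta> K N) \<le> (\<integral>\<omega>. indicator (exceed \<delta> K N) \<omega> * (X N \<omega> - X K \<omega>)\<^sup>2 \<partial>M)"
    using exceed_bound[OF order_refl assms(1,2)] .
  also have "\<dots> \<le> (\<integral>\<omega>. (X N \<omega> - X K \<omega>)\<^sup>2 \<partial>M)"
    using exceed_sets_M[OF assms(1)] unfolding power2_eq_square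
    by (intro integral_mono bdd_integrable bdd_mult bdd_indicator bdd_diff bdd_X)
       (auto simp: indicator_def)
  also have "\<dots> = energy N - energy K" using increment_L2[OF assms(1)] .
  finally show ?thesis .
qed

lemma window_oscillation_prob:
  assumes "N \<le> K" "0 < \<delta>"
  shows "prob {\<omega>\<in>space M. \<exists>n\<in>{N..K}. \<exists>m\<in>{N..K}. 2*\<delta> \<le> \<bar>X n \<omega> - X m \<omega>\<bar>}
           \<le> (energy N - energy K) / \<delta>\<^sup>2"
proof -
  have "{\<omega>\<in>space M. \<exists>n\<in>{N..K}. \<exists>m\<in>{N..K}. 2*\<delta> \<le> \<bar>X n \<omega> - X m \<omega>\<bar>} \<subseteq> exceed \<delta> K N"
  proof -
    have "\<delta> \<le> \<bar>a - c\<bar> \<or> \<delta> \<le> \<bar>b - c\<bar>" if "2*\<delta> \<le> \<bar>a - b\<bar>" for a b c :: real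
      using that by linarith
    then show ?thesis unfolding exceed_def by fastforce
  qed
  then have "prob {\<omega>\<in>space M. \<exists>n\<in>{N..K}. \<exists>m\<in>{N..K}. 2*\<delta> \<le> \<bar>X n \<omega> - X m \<omega>\<bar>} \<le> prob (exceed \<delta> K N)"
    using exceed_sets_M[OF assms(1)] by (rule finite_measure_mono)
  also have "\<dots> \<le> (energy N - energy K) / \<delta>\<^sup>2"
    using maximal_inequality[OF assms] assms by (simp add: pos_le_divide_eq mult.commute)
  finally show ?thesis .
qed

text \<open>Since the energy converges, for every \<delta> > 0 almost every path eventually
  oscillates by less than 2\<delta>.\<close>
lemma eventually_small_oscillation:
  assumes "0 < \<delta>"
  shows "AE \<omega> in M. \<exists>N. \<forall>n\<ge>N. \<forall>m\<ge>N. \<bar>X n \<omega> - X m \<omega>\<bar> < 2*\<delta>"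
proof -
  obtain e where e: "energy \<longlonglongrightarrow> e" "\<And>i. e \<le> energy i"
    using decseq_convergent[OF energy_decseq, of 0] energy_nonneg by auto
  define W where "W N K = {\<omega>\<in>space M. \<exists>n\<in>{N..K}. \<exists>m\<in>{N..K}. 2*\<delta> \<le> \<bar>X n \<omega> - X m \<omega>\<bar>}" for N K
  define Osc where "Osc N = (\<Union>K. W N K)" for N
  have W_sets: "W N K \<in> sets M" for N K
  proof -
    have "W N K = (\<Union>n\<in>{N..K}. \<Union>m\<in>{N..K}. {\<omega>\<in>space M. 2*\<delta> \<le> \<bar>X n \<omega> - X m \<omega>\<bar>})"
      unfolding W_def by auto
    then show ?thesis by auto
  qed
  have Osc_bound: "prob (Osc N) \<le> (energy N - e) / \<delta>\<^sup>2" for N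
  proof -
    have "incseq (W N)"
      by (rule incseq_SucI) (fastforce simp: W_def intro: le_SucI)
    then have "(\<lambda>K. prob (W N K)) \<longlonglongrightarrow> prob (Osc N)"
      unfolding Osc_def using W_sets by (intro finite_Lim_measure_incseq) auto
    moreover have "prob (W N K) \<le> (energy N - e) / \<delta>\<^sup>2" if "N \<le> K" for K
      using window_oscillation_prob[OF that assms] e(2)[of K] assms unfolding W_def
      by (smt (verit, best) divide_right_mono zero_le_power2)
    ultimately show ?thesis by (intro LIMSEQ_le_const2) auto
  qed
  have null: "(\<Inter>N. Osc N) \<in> null_sets M"
  proof -
    have bound: "prob (\<Inter>N. Osc N) \<le> (energy N - e) / \<delta>\<^sup>2" for N
      using finite_measure_mono[of "\<Inter>N. Osc N" "Osc N"] Osc_bound[of N] W_sets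
      unfolding Osc_def by fastforce
    have "(\<lambda>N. (energy N - e) / \<delta>\<^sup>2) \<longlonglongrightarrow> (e - e) / \<delta>\<^sup>2"
      using assms by (intro tendsto_intros e(1)) auto
    then have "prob (\<Inter>N. Osc N) \<le> 0"
      using bound by (intro LIMSEQ_le_const[of "\<lambda>N. (energy N - e) / \<delta>\<^sup>2"]) auto
    then show ?thesis
      using W_sets measure_nonneg[of M "\<Inter>N. Osc N"] unfolding Osc_def
      by (auto simp: emeasure_eq_measure)
  qed
  show ?thesis
  proof (rule AE_I'[OF null], intro subsetI INT_I)
    fix \<omega> N assume "\<omega> \<in> {\<omega>\<in>space M. \<not> (\<exists>N. \<forall>n\<ge>N. \<forall>m\<ge>N. \<bar>X n \<omega> - X m \<omega>\<bar> < 2*\<delta>)}"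
    then obtain n m where "\<omega> \<in> space M" "N \<le> n" "N \<le> m" "2*\<delta> \<le> \<bar>X n \<omega> - X m \<omega>\<bar>"
      by (simp add: not_less) blast
    then have "\<omega> \<in> W N (max n m)" unfolding W_def by (intro CollectI conjI bexI) auto
    then show "\<omega> \<in> Osc N" unfolding Osc_def by auto
  qed
qed

lemma AE_Cauchy: "AE \<omega> in M. Cauchy (\<lambda>n. X n \<omega>)"
proof -
  have "AE \<omega> in M. \<forall>j::nat. \<exists>N. \<forall>n\<ge>N. \<forall>m\<ge>N. \<bar>X n \<omega> - X m \<omega>\<bar> < 2 / Suc j"
    unfolding AE_all_countable using eventually_small_oscillation[of "1 / Suc _"] by simp
  then show ?thesis
  proof eventually_elim
    case (elim \<omega>)
    show "Cauchy (\<lambda>n. X n \<omega>)"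
    proof (rule CauchyI)
      fix e :: real assume "0 < e"
      then obtain j where "2 / Suc j < e"
        using reals_Archimedean[of "e/2"] by (auto simp: field_simps)
      then show "\<exists>N. \<forall>m\<ge>N. \<forall>n\<ge>N. norm (X m \<omega> - X n \<omega>) < e"
        using elim[rule_format, of j] by fastforce
    qed
  qed
qed

text \<open>The almost sure limit, truncated to [-B, B] so that it is defined and bounded
  everywhere.  Computed from any tail of the sequence, it is F N-measurable for every
  N, i.e. measurable with respect to the tail sigma-algebra.\<close>
definition limit :: "'a \<Rightarrow> real" where "limit \<omega> = max (-B) (min B (lim (\<lambda>i. X i \<omega>)))"

lemma limit_tail_measurable: "limit \<in> borel_measurable (F N)"
proof -
  have [measurable]: "(\<lambda>\<omega>. X (i + N) \<omega>) \<in> borel_measurable (F N)" for i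
    using measurable_F_mono[OF _ X_measurable, of N "i + N"] by simp
  have "limit = (\<lambda>\<omega>. max (-B) (min B (lim (\<lambda>i. X (i + N) \<omega>))))"
    unfolding limit_def using lim_shift[of "\<lambda>i. X i \<omega>" N for \<omega>] by simp
  also have "\<dots> \<in> borel_measurable (F N)" by measurable
  finally show ?thesis .
qed

lemma limit_measurable [measurable]: "limit \<in> borel_measurable M"
  using measurable_F_M[OF limit_tail_measurable] .

lemma limit_integrable: "integrable M limit"
  by (rule integrable_const_bound[where B="\<bar>B\<bar>"]) (auto simp: limit_def)

lemma AE_tendsto_limit: "AE \<omega> in M. (\<lambda>n. X n \<omega>) \<longlonglongrightarrow> limit \<omega>"
  using AE_Cauchy AE_space
proof eventually_elim
  case (elim \<omega>)
  then have L: "(\<lambda>n. X n \<omega>) \<longlonglongrightarrow> lim (\<lambda>n. X n \<omega>)"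
    by (simp add: Cauchy_convergent_iff convergent_LIMSEQ_iff)
  have "\<forall>n. -B \<le> X n \<omega> \<and> X n \<omega> \<le> B" using X_bounded[OF elim(2)] by (simp add: abs_le_iff minus_le_iff)
  then have "-B \<le> lim (\<lambda>n. X n \<omega>)" "lim (\<lambda>n. X n \<omega>) \<le> B"
    by (auto intro: LIMSEQ_le_const[OF L] LIMSEQ_le_const2[OF L])
  then show ?case using L unfolding limit_def by simp
qed

text \<open>On a trivial tail, a tail-measurable integrable function is almost surely at most
  its mean: the event where it exceeds the mean is a tail event, and it cannot have
  probability one.\<close>
lemma tail_measurable_AE_le_mean:
  fixes g :: "'a \<Rightarrow> real"
  assumes meas: "\<And>n. g \<in> borel_measurable (F n)" and int: "integrable M g"
  shows "AE \<omega> in M. g \<omega> \<le> (\<integral>\<omega>. g \<omega> \<partial>M)"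
proof -
  define z where "z = (\<integral>\<omega>. g \<omega> \<partial>M)"
  define G where "G = {\<omega>\<in>space M. z < g \<omega>}"
  have G_tail: "G \<in> sets (F n)" for n
  proof -
    have "{\<omega>\<in>space (F n). z < g \<omega>} \<in> sets (F n)"
      using borel_measurable_const meas[of n] by (rule borel_measurable_less)
    then show ?thesis unfolding G_def by simp
  qed
  have G: "G \<in> sets M" using G_tail[of 0] sets_F by auto
  have "prob G \<noteq> 1"
  proof
    assume "prob G = 1"
    then have ae: "AE \<omega> in M. \<omega> \<in> G" by (rule AE_prob_1)
    have int': "integrable M (\<lambda>\<omega>. g \<omega> - z)" using int by simp
    have "(\<integral>\<omega>. g \<omega> - z \<partial>M) = 0" using int unfolding z_def by (simp add: prob_space)
    moreover have "AE \<omega> in M. 0 \<le> g \<omega> - z" using ae by eventually_elim (auto simp: G_def)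
    ultimately have "AE \<omega> in M. g \<omega> - z = 0" using integral_nonneg_eq_0_iff_AE[OF int'] by simp
    with ae have "AE \<omega> in M. False" by eventually_elim (auto simp: G_def)
    then show False by (simp add: AE_False)
  qed
  then have "prob G = 0" using tail_trivial[OF G_tail] by blast
  then have "AE \<omega> in M. \<omega> \<notin> G"
    using G by (intro AE_I'[of G]) (auto simp: emeasure_eq_measure)
  then show ?thesis using AE_space unfolding z_def[symmetric] by eventually_elim (auto simp: G_def)
qed

lemma tail_measurable_AE_const:
  fixes g :: "'a \<Rightarrow> real"
  assumes "\<And>n. g \<in> borel_measurable (F n)" "integrable M g"
  shows "AE \<omega> in M. g \<omega> = (\<integral>\<omega>. g \<omega> \<partial>M)"
proof -
  have "AE \<omega> in M. g \<omega> \<le> (\<integral>\<omega>. g \<omega> \<partial>M)"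
    using assms by (rule tail_measurable_AE_le_mean)
  moreover have "AE \<omega> in M. - g \<omega> \<le> (\<integral>\<omega>. - g \<omega> \<partial>M)"
    using assms by (intro tail_measurable_AE_le_mean) auto
  ultimately show ?thesis by eventually_elim auto
qed

theorem AE_tendsto_mean: "AE \<omega> in M. (\<lambda>n. X n \<omega>) \<longlonglongrightarrow> (\<integral>\<omega>. h \<omega> \<partial>M)"
proof -
  have mean_X: "(\<integral>\<omega>. X n \<omega> \<partial>M) = (\<integral>\<omega>. h \<omega> \<partial>M)" for n
    using cond_exp[of "\<lambda>_. 1" n 1] by simp
  have "(\<lambda>n. \<integral>\<omega>. X n \<omega> \<partial>M) \<longlonglongrightarrow> (\<integral>\<omega>. limit \<omega> \<partial>M)"
  proof (rule integral_dominated_convergence[where w="\<lambda>_. \<bar>B\<bar>"])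
    show "AE x in M. (\<lambda>i. X i x) \<longlonglongrightarrow> limit x" by (rule AE_tendsto_limit)
    show "AE x in M. norm (X i x) \<le> \<bar>B\<bar>" for i
      using X_bounded by (intro AE_I2) (smt (verit) real_norm_def)
  qed auto
  then have mean_limit: "(\<integral>\<omega>. h \<omega> \<partial>M) = (\<integral>\<omega>. limit \<omega> \<partial>M)"
    unfolding mean_X by (simp add: LIMSEQ_const_iff)
  show ?thesis
    using AE_tendsto_limit tail_measurable_AE_const[OF limit_tail_measurable limit_integrable]
    by eventually_elim (simp add: mean_limit)
qed

end

section \<open>Kernels as conditional expectations\<close>

lemma prob_space_emeasure: "prob_space Q \<Longrightarrow> emeasure Q A = ennreal (measure Q A)"
  by (simp add: finite_measure.emeasure_eq_measure prob_space.axioms(1))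

text \<open>The sigma-algebra \<open>nonfuture\<close> = F_{S\<setminus>L_+} is the
  domain of the measures K \<omega>; \<open>boundary\<close> = F_{L_- \<union> L^*} is the sigma-algebra the
  kernel depends on.\<close>
locale invariant_kernel =
  fixes M :: "'e measure" and L :: "'s::order set" and K :: "('s \<Rightarrow> 'e) \<Rightarrow> ('s \<Rightarrow> 'e) measure"
    and \<mu> :: "('s \<Rightarrow> 'e) measure"
  assumes proper: "proper_oriented_kernel M L K" and time_box: "time_box L"
    and prob_mu: "prob_space \<mu>" and sets_mu: "sets \<mu> = sets (Conf M)"
    and invariant: "\<And>A. A \<in> sets (Fsub M (- future L)) \<Longrightarrow> (\<integral>\<omega>. measure (K \<omega>) A \<partial>\<mu>) = measure \<mu> A"
begin

abbreviation "nonfuture \<equiv> Fsub M (- future L)"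
abbreviation "boundary \<equiv> Fsub M (past L \<union> outer L)"

lemma space_mu: "space \<mu> = space (Conf M)"
  using sets_eq_imp_space_eq[OF sets_mu] .

lemma K_prob: "\<omega> \<in> space (Conf M) \<Longrightarrow> prob_space (K \<omega>)"
  using proper unfolding proper_oriented_kernel_def by auto

lemma K_sets: "\<omega> \<in> space (Conf M) \<Longrightarrow> sets (K \<omega>) = sets nonfuture"
  using proper unfolding proper_oriented_kernel_def by auto

lemma K_space: "\<omega> \<in> space (Conf M) \<Longrightarrow> space (K \<omega>) = space (Conf M)"
  using sets_eq_imp_space_eq[OF K_sets] by simp

lemma K_space_1: "\<omega> \<in> space (Conf M) \<Longrightarrow> emeasure (K \<omega>) (space (Conf M)) = 1"
  using prob_space.emeasure_space_1[OF K_prob] K_space by metis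

lemma K_measure_measurable: "A \<in> sets nonfuture \<Longrightarrow> (\<lambda>\<omega>. measure (K \<omega>) A) \<in> borel_measurable boundary"
  using proper unfolding proper_oriented_kernel_def by auto

lemma K_boundary_event: "B \<in> sets boundary \<Longrightarrow> \<omega> \<in> space (Conf M) \<Longrightarrow> measure (K \<omega>) B = indicator B \<omega>"
  using proper unfolding proper_oriented_kernel_def by auto

lemma subalgebra_boundary: "subalgebra nonfuture boundary"
  using sets_Fsub_mono[OF past_outer_subset[OF time_box]] unfolding subalgebra_def by simp

lemma subalgebra_mu: "subalgebra \<mu> (Fsub M U)"
  using subalgebra_Fsub[OF sets_mu] .

lemma measurable_Fsub_mu: "f \<in> measurable (Fsub M U) N \<Longrightarrow> f \<in> measurable \<mu> N"
  using measurable_from_subalg[OF subalgebra_mu] .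

lemma measurable_nonfuture_K: "h \<in> borel_measurable nonfuture \<Longrightarrow> \<omega> \<in> space (Conf M) \<Longrightarrow> h \<in> borel_measurable (K \<omega>)"
  using measurable_cong_sets[OF K_sets refl] by auto

lemma K_measurable: "K \<in> measurable boundary (subprob_algebra nonfuture)"
proof (rule measurable_subprob_algebra_generated[where \<Omega>="space nonfuture" and G="sets nonfuture"])
  show "sets nonfuture = sigma_sets (space nonfuture) (sets nonfuture)" by (rule sets.sigma_sets_eq[symmetric])
  show "Int_stable (sets nonfuture)" by (intro Int_stableI) auto
  show "sets nonfuture \<subseteq> Pow (space nonfuture)" by (rule sets.space_closed)
  fix a assume "a \<in> space boundary"
  then show "subprob_space (K a)" "sets (K a) = sets nonfuture"
    using K_prob K_sets by (auto intro: prob_space_imp_subprob_space)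
next
  fix A assume A: "A \<in> sets nonfuture"
  have "(\<lambda>a. ennreal (measure (K a) A)) \<in> borel_measurable boundary"
    using K_measure_measurable[OF A] by measurable
  then show "(\<lambda>a. emeasure (K a) A) \<in> borel_measurable boundary"
    by (rule measurable_cong[THEN iffD1, rotated]) (simp add: prob_space_emeasure[OF K_prob])
next
  show "(\<lambda>a. emeasure (K a) (space nonfuture)) \<in> borel_measurable boundary"
    by (rule measurable_cong[THEN iffD2, of _ _ "\<lambda>_. 1"])
       (auto simp: K_space_1)
qed

lemma kernel_integral_measurable:
  assumes "(h :: _ \<Rightarrow> real) \<in> borel_measurable nonfuture"
  shows "(\<lambda>\<omega>. \<integral>\<sigma>. h \<sigma> \<partial>K \<omega>) \<in> borel_measurable boundary"
  using measurable_compose[OF K_measurable integral_measurable_subprob_algebra[OF assms]] by simp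

lemma integrable_bounded:
  fixes f :: "_ \<Rightarrow> real"
  assumes "prob_space \<nu>" "space \<nu> = space (Conf M)" "f \<in> borel_measurable \<nu>"
    "\<And>x. x \<in> space (Conf M) \<Longrightarrow> \<bar>f x\<bar> \<le> C"
  shows "integrable \<nu> f"
proof -
  interpret prob_space \<nu> by fact
  show ?thesis using assms by (intro integrable_const_bound[where B=C] AE_I2) auto
qed

lemma kernel_integrable:
  fixes h :: "_ \<Rightarrow> real"
  assumes "h \<in> borel_measurable nonfuture" "\<And>x. x \<in> space (Conf M) \<Longrightarrow> \<bar>h x\<bar> \<le> C"
    "\<omega> \<in> space (Conf M)"
  shows "integrable (K \<omega>) h"
  using assms by (intro integrable_bounded K_prob K_space measurable_nonfuture_K)

lemma kernel_integral_bounded: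
  fixes h :: "_ \<Rightarrow> real"
  assumes "h \<in> borel_measurable nonfuture" "\<And>x. x \<in> space (Conf M) \<Longrightarrow> \<bar>h x\<bar> \<le> C"
    "\<omega> \<in> space (Conf M)"
  shows "\<bar>\<integral>\<sigma>. h \<sigma> \<partial>K \<omega>\<bar> \<le> C"
proof -
  interpret prob_space "K \<omega>" using K_prob[OF assms(3)] .
  have "\<bar>\<integral>\<sigma>. h \<sigma> \<partial>K \<omega>\<bar> \<le> (\<integral>\<sigma>. \<bar>h \<sigma>\<bar> \<partial>K \<omega>)"
    by (rule integral_abs_bound)
  also have "\<dots> \<le> C"
    using assms by (intro integral_le_const AE_I2 integrable_abs kernel_integrable)
      (auto simp: K_space)
  finally show ?thesis .
qed

lemma restriction_is_mixture: "restr_to_subalg \<mu> nonfuture = \<mu> \<bind> K"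
proof (rule measure_eqI)
  have ne: "space \<mu> \<noteq> {}" using prob_space.not_empty[OF prob_mu] .
  have K_mu: "K \<in> measurable \<mu> (subprob_algebra nonfuture)"
    using measurable_from_subalg[OF subalgebra_mu K_measurable] .
  show "sets (restr_to_subalg \<mu> nonfuture) = sets (\<mu> \<bind> K)"
    using sets_restr_to_subalg[OF subalgebra_mu] sets_bind[of \<mu> K nonfuture, OF _ ne] K_sets space_mu by simp
  fix A assume "A \<in> sets (restr_to_subalg \<mu> nonfuture)"
  then have A: "A \<in> sets nonfuture" using sets_restr_to_subalg[OF subalgebra_mu] by simp
  have int: "integrable \<mu> (\<lambda>\<omega>. measure (K \<omega>) A)"
    using measurable_Fsub_mu[OF K_measure_measurable[OF A]]
    by (rule integrable_bounded[OF prob_mu space_mu, where C=1])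
       (auto intro!: prob_space.prob_le_1[OF K_prob])
  have "emeasure (\<mu> \<bind> K) A = (\<integral>\<^sup>+\<omega>. emeasure (K \<omega>) A \<partial>\<mu>)"
    using emeasure_bind[OF ne K_mu A] .
  also have "\<dots> = (\<integral>\<^sup>+\<omega>. ennreal (measure (K \<omega>) A) \<partial>\<mu>)"
    by (intro nn_integral_cong) (simp add: space_mu prob_space_emeasure[OF K_prob])
  also have "\<dots> = ennreal (\<integral>\<omega>. measure (K \<omega>) A \<partial>\<mu>)"
    using int by (intro nn_integral_eq_integral) auto
  also have "\<dots> = emeasure (restr_to_subalg \<mu> nonfuture) A"
    using invariant[OF A] emeasure_restr_to_subalg[OF subalgebra_mu A]
    by (simp add: prob_space_emeasure[OF prob_mu])
  finally show "emeasure (restr_to_subalg \<mu> nonfuture) A = emeasure (\<mu> \<bind> K) A" by simp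
qed

lemma integral_kernel_integral_nonneg:
  fixes h :: "_ \<Rightarrow> real"
  assumes hm: "h \<in> borel_measurable nonfuture" and hb: "\<And>x. x \<in> space (Conf M) \<Longrightarrow> \<bar>h x\<bar> \<le> C"
    and h0: "\<And>x. x \<in> space (Conf M) \<Longrightarrow> 0 \<le> h x"
  shows "(\<integral>\<omega>. (\<integral>\<sigma>. h \<sigma> \<partial>K \<omega>) \<partial>\<mu>) = (\<integral>\<omega>. h \<omega> \<partial>\<mu>)"
proof -
  have K_mu: "K \<in> measurable \<mu> (subprob_algebra nonfuture)"
    using measurable_from_subalg[OF subalgebra_mu K_measurable] .
  have hm': "(\<lambda>x. ennreal (h x)) \<in> borel_measurable nonfuture" using hm by measurable
  have int_h: "integrable \<mu> h"
    using measurable_Fsub_mu[OF hm] hb by (rule integrable_bounded[OF prob_mu space_mu])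
  have int_Kh: "integrable \<mu> (\<lambda>\<omega>. \<integral>\<sigma>. h \<sigma> \<partial>K \<omega>)"
    using measurable_Fsub_mu[OF kernel_integral_measurable[OF hm]] kernel_integral_bounded[OF hm hb]
    by (rule integrable_bounded[OF prob_mu space_mu])
  have Kh_nonneg: "0 \<le> (\<integral>\<sigma>. h \<sigma> \<partial>K \<omega>)" if "\<omega> \<in> space (Conf M)" for \<omega>
    using h0 by (intro Bochner_Integration.integral_nonneg) (auto simp: K_space[OF that])
  have "ennreal (\<integral>\<omega>. h \<omega> \<partial>\<mu>) = (\<integral>\<^sup>+x. ennreal (h x) \<partial>\<mu>)"
    using int_h h0 by (intro nn_integral_eq_integral[symmetric] AE_I2) (auto simp: space_mu)
  also have "\<dots> = (\<integral>\<^sup>+x. ennreal (h x) \<partial>restr_to_subalg \<mu> nonfuture)"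
    using nn_integral_subalgebra2[OF subalgebra_mu hm'] by simp
  also have "\<dots> = (\<integral>\<^sup>+\<omega>. \<integral>\<^sup>+x. ennreal (h x) \<partial>K \<omega> \<partial>\<mu>)"
    unfolding restriction_is_mixture using nn_integral_bind[OF hm' K_mu] .
  also have "\<dots> = (\<integral>\<^sup>+\<omega>. ennreal (\<integral>\<sigma>. h \<sigma> \<partial>K \<omega>) \<partial>\<mu>)"
  proof (rule nn_integral_cong)
    fix \<omega> assume "\<omega> \<in> space \<mu>"
    then have \<omega>: "\<omega> \<in> space (Conf M)" by (simp add: space_mu)
    show "(\<integral>\<^sup>+x. ennreal (h x) \<partial>K \<omega>) = ennreal (\<integral>\<sigma>. h \<sigma> \<partial>K \<omega>)"
      using kernel_integrable[OF hm hb \<omega>] h0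
      by (intro nn_integral_eq_integral AE_I2) (auto simp: K_space[OF \<omega>])
  qed
  also have "\<dots> = ennreal (\<integral>\<omega>. (\<integral>\<sigma>. h \<sigma> \<partial>K \<omega>) \<partial>\<mu>)"
    using int_Kh Kh_nonneg by (intro nn_integral_eq_integral AE_I2) (simp_all add: space_mu)
  finally have "ennreal (\<integral>\<omega>. h \<omega> \<partial>\<mu>) = ennreal (\<integral>\<omega>. (\<integral>\<sigma>. h \<sigma> \<partial>K \<omega>) \<partial>\<mu>)" .
  moreover have "0 \<le> (\<integral>\<omega>. h \<omega> \<partial>\<mu>)"
    using h0 by (intro Bochner_Integration.integral_nonneg) (auto simp: space_mu)
  moreover have "0 \<le> (\<integral>\<omega>. (\<integral>\<sigma>. h \<sigma> \<partial>K \<omega>) \<partial>\<mu>)"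
    by (rule Bochner_Integration.integral_nonneg) (simp add: Kh_nonneg space_mu)
  ultimately show ?thesis by simp
qed

lemma integral_kernel_integral:
  fixes h :: "_ \<Rightarrow> real"
  assumes hm: "h \<in> borel_measurable nonfuture" and hb: "\<And>x. x \<in> space (Conf M) \<Longrightarrow> \<bar>h x\<bar> \<le> C"
  shows "(\<integral>\<omega>. (\<integral>\<sigma>. h \<sigma> \<partial>K \<omega>) \<partial>\<mu>) = (\<integral>\<omega>. h \<omega> \<partial>\<mu>)"
proof -
  interpret pm: prob_space \<mu> by (rule prob_mu)
  define g where "g x = h x + C" for x
  have gm: "g \<in> borel_measurable nonfuture" unfolding g_def using hm by measurable
  have gb: "\<bar>g x\<bar> \<le> 2 * C" "0 \<le> g x" if "x \<in> space (Conf M)" for x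
    using hb[OF that] unfolding g_def by linarith+
  have Kg: "(\<integral>\<sigma>. g \<sigma> \<partial>K \<omega>) = (\<integral>\<sigma>. h \<sigma> \<partial>K \<omega>) + C" if \<omega>: "\<omega> \<in> space (Conf M)" for \<omega>
  proof -
    interpret pK: prob_space "K \<omega>" using K_prob[OF \<omega>] .
    show ?thesis unfolding g_def using kernel_integrable[OF hm hb \<omega>] by (simp add: pK.prob_space)
  qed
  have int_h: "integrable \<mu> h"
    using measurable_Fsub_mu[OF hm] hb by (rule integrable_bounded[OF prob_mu space_mu])
  have int_Kh: "integrable \<mu> (\<lambda>\<omega>. \<integral>\<sigma>. h \<sigma> \<partial>K \<omega>)"
    using measurable_Fsub_mu[OF kernel_integral_measurable[OF hm]] kernel_integral_bounded[OF hm hb]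
    by (rule integrable_bounded[OF prob_mu space_mu])
  have "(\<integral>\<omega>. (\<integral>\<sigma>. h \<sigma> \<partial>K \<omega>) \<partial>\<mu>) + C = (\<integral>\<omega>. (\<integral>\<sigma>. h \<sigma> \<partial>K \<omega>) + C \<partial>\<mu>)"
    using int_Kh by (simp add: pm.prob_space)
  also have "\<dots> = (\<integral>\<omega>. (\<integral>\<sigma>. g \<sigma> \<partial>K \<omega>) \<partial>\<mu>)"
    by (rule Bochner_Integration.integral_cong) (auto simp: Kg space_mu)
  also have "\<dots> = (\<integral>\<omega>. g \<omega> \<partial>\<mu>)"
    using gb by (intro integral_kernel_integral_nonneg[OF gm]) auto
  also have "\<dots> = (\<integral>\<omega>. h \<omega> \<partial>\<mu>) + C"
    using int_h unfolding g_def by (simp add: pm.prob_space)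
  finally show ?thesis by simp
qed

text \<open>The kernel is a version of the conditional expectation given the boundary: boundary
  weights can be pulled inside the kernel, because K \<omega> is concentrated on the atom of
  \<omega> in the boundary sigma-algebra.\<close>
lemma kernel_cond_exp:
  fixes h f :: "_ \<Rightarrow> real"
  assumes hm: "h \<in> borel_measurable nonfuture" and hb: "\<And>x. x \<in> space (Conf M) \<Longrightarrow> \<bar>h x\<bar> \<le> C"
    and fm: "f \<in> borel_measurable boundary" and fb: "\<And>x. x \<in> space (Conf M) \<Longrightarrow> \<bar>f x\<bar> \<le> Cf"
  shows "(\<integral>\<omega>. f \<omega> * (\<integral>\<sigma>. h \<sigma> \<partial>K \<omega>) \<partial>\<mu>) = (\<integral>\<omega>. f \<omega> * h \<omega> \<partial>\<mu>)"
proof -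
  have fN: "f \<in> borel_measurable nonfuture" using measurable_from_subalg[OF subalgebra_boundary fm] .
  have fhm: "(\<lambda>x. f x * h x) \<in> borel_measurable nonfuture" using fN hm by measurable
  have fhb: "\<bar>f x * h x\<bar> \<le> \<bar>Cf\<bar> * \<bar>C\<bar>" if "x \<in> space (Conf M)" for x
    using fb[OF that] hb[OF that] by (simp add: abs_mult mult_mono')
  have pull_out: "(\<integral>\<sigma>. f \<sigma> * h \<sigma> \<partial>K \<omega>) = f \<omega> * (\<integral>\<sigma>. h \<sigma> \<partial>K \<omega>)" if \<omega>: "\<omega> \<in> space (Conf M)" for \<omega>
  proof -
    interpret pK: prob_space "K \<omega>" using K_prob[OF \<omega>] .
    define S where "S = {y\<in>space boundary. f y = f \<omega>}"
    have [measurable]: "f \<in> borel_measurable boundary" by (rule fm)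
    have S: "S \<in> sets boundary" unfolding S_def by measurable
    have "measure (K \<omega>) S = 1" using K_boundary_event[OF S \<omega>] \<omega> by (simp add: S_def)
    then have "AE y in K \<omega>. y \<in> S" by (rule pK.AE_prob_1)
    then have "(\<integral>\<sigma>. f \<sigma> * h \<sigma> \<partial>K \<omega>) = (\<integral>\<sigma>. f \<omega> * h \<sigma> \<partial>K \<omega>)"
      using measurable_nonfuture_K[OF fhm \<omega>] measurable_nonfuture_K[OF hm \<omega>]
      by (intro integral_cong_AE) (auto simp: S_def)
    then show ?thesis by simp
  qed
  have "(\<integral>\<omega>. f \<omega> * (\<integral>\<sigma>. h \<sigma> \<partial>K \<omega>) \<partial>\<mu>) = (\<integral>\<omega>. (\<integral>\<sigma>. f \<sigma> * h \<sigma> \<partial>K \<omega>) \<partial>\<mu>)"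
    by (rule Bochner_Integration.integral_cong) (auto simp: pull_out space_mu)
  also have "\<dots> = (\<integral>\<omega>. f \<omega> * h \<omega> \<partial>\<mu>)" by (rule integral_kernel_integral[OF fhm fhb])
  finally show ?thesis .
qed

end

lemma invariant_kernel_of_Gibbs:
  assumes "POS M \<gamma>" "Gibbs M \<gamma> \<mu>" "time_box L"
  shows "invariant_kernel M L (\<gamma> L) \<mu>"
  using assms unfolding POS_def Gibbs_def by (auto intro!: invariant_kernel.intro)

section \<open>Extremal measures are trivial at infinity\<close>

text \<open>Events that, for every n, only depend on the past and outer time of Lam n.
  Along an exhausting sequence of time boxes these form the tail sigma-algebra.\<close>
definition tail_event :: "'e measure \<Rightarrow> (nat \<Rightarrow> 's::order set) \<Rightarrow> ('s \<Rightarrow> 'e) set \<Rightarrow> bool" where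
  "tail_event M Lam A \<longleftrightarrow> (\<forall>n. A \<in> sets (Fsub M (past (Lam n) \<union> outer (Lam n))))"

lemma tail_event_sets: "tail_event M Lam A \<Longrightarrow> A \<in> sets (Conf M)"
  unfolding tail_event_def using sets_Fsub_Conf by blast

lemma tail_event_compl: "tail_event M Lam A \<Longrightarrow> tail_event M Lam (space (Conf M) - A)"
  unfolding tail_event_def using sets.compl_sets by fastforce

lemma uniform_measure_eq_density:
  assumes "prob_space \<mu>" "B \<in> sets \<mu>" "0 < measure \<mu> B"
  shows "uniform_measure \<mu> B = density \<mu> (\<lambda>x. ennreal (indicator B x / measure \<mu> B))"
proof -
  have "1 / ennreal (measure \<mu> B) = ennreal (1 / measure \<mu> B)"
    using assms(3) by (metis divide_ennreal ennreal_1 zero_le_one)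
  then have "indicator B x / emeasure \<mu> B = ennreal (indicator B x / measure \<mu> B)" for x
    using prob_space_emeasure[OF assms(1)] by (auto simp: indicator_def)
  then show ?thesis unfolding uniform_measure_def by simp
qed

text \<open>Conditioning a measure of G(\<gamma>) on a tail event of positive probability gives
  again a measure of G(\<gamma>): the kernel of any time box L \<subseteq> Lam n does not see the
  conditioning event, which is a boundary event for L.\<close>
lemma Gibbs_conditioned_on_tail_event:
  assumes pos: "POS M \<gamma>" and g: "Gibbs M \<gamma> \<mu>" and tb: "\<And>n. time_box (Lam n)"
    and inc: "incseq Lam" and cover: "(\<Union>n. Lam n) = UNIV"
    and tail: "tail_event M Lam B" and B_pos: "0 < measure \<mu> B"
  shows "Gibbs M \<gamma> (uniform_measure \<mu> B)"
proof -
  have prob_mu: "prob_space \<mu>" and sets_mu: "sets \<mu> = sets (Conf M)" using g unfolding Gibbs_def by auto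
  interpret pm: prob_space \<mu> by (rule prob_mu)
  have B: "B \<in> sets \<mu>" using tail_event_sets[OF tail] sets_mu by simp
  define p where "p = measure \<mu> B"
  have density: "uniform_measure \<mu> B = density \<mu> (\<lambda>x. ennreal (indicator B x / p))"
    unfolding p_def by (rule uniform_measure_eq_density[OF prob_mu B B_pos])
  have "(\<integral>\<omega>. measure (\<gamma> L \<omega>) A \<partial>uniform_measure \<mu> B) = measure (uniform_measure \<mu> B) A"
    if L: "time_box L" and A: "A \<in> sets (Fsub M (- future L))" for L A
  proof -
    interpret k: invariant_kernel M L "\<gamma> L" \<mu> by (rule invariant_kernel_of_Gibbs[OF pos g L])
    have "finite L" using L by (simp add: time_box_def)
    from finite_subset_eventually[OF this inc cover] obtain n where "L \<subseteq> Lam n" by blast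
    then have "sets (Fsub M (past (Lam n) \<union> outer (Lam n))) \<subseteq> sets k.boundary"
      by (intro sets_Fsub_mono past_outer_antimono tb)
    then have B_boundary: "B \<in> sets k.boundary"
      using tail unfolding tail_event_def by blast
    have A_mu: "A \<in> sets \<mu>" using A sets_Fsub_Conf sets_mu by auto
    have measure_as_integral: "measure (\<gamma> L \<omega>) A = (\<integral>\<sigma>. indicator A \<sigma> \<partial>\<gamma> L \<omega>)" if "\<omega> \<in> space (Conf M)" for \<omega>
      using A k.K_sets[OF that] by simp
    have "(\<integral>\<omega>. measure (\<gamma> L \<omega>) A \<partial>uniform_measure \<mu> B)
        = (\<integral>\<omega>. (indicator B \<omega> / p) * measure (\<gamma> L \<omega>) A \<partial>\<mu>)"
      unfolding density using B k.measurable_Fsub_mu[OF k.K_measure_measurable[OF A]]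
      by (subst integral_density) (auto simp: p_def)
    also have "\<dots> = (\<integral>\<omega>. indicator B \<omega> * (\<integral>\<sigma>. indicator A \<sigma> \<partial>\<gamma> L \<omega>) \<partial>\<mu>) / p"
      by (subst integral_divide_zero[symmetric], rule Bochner_Integration.integral_cong)
         (auto simp: measure_as_integral k.space_mu)
    also have "\<dots> = (\<integral>\<omega>. indicator B \<omega> * indicator A \<omega> \<partial>\<mu>) / p"
    proof -
      have "indicator A \<in> borel_measurable k.nonfuture" "indicator B \<in> borel_measurable k.boundary"
        using A B_boundary by auto
      from k.kernel_cond_exp[OF this(1) _ this(2), of 1 1] show ?thesis by (simp add: indicator_def)
    qed
    also have "\<dots> = measure (uniform_measure \<mu> B) A"
      using B_pos B A_mu
      by (simp add: indicator_inter_arith[symmetric] Int_absorb2 p_def pm.emeasure_eq_measure)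
    finally show ?thesis .
  qed
  moreover have "prob_space (uniform_measure \<mu> B)"
    using B_pos B by (intro prob_space_uniform_measure) (auto simp: pm.emeasure_eq_measure)
  ultimately show ?thesis using sets_mu unfolding Gibbs_def by auto
qed

lemma (in prob_space) uniform_measure_mixture:
  assumes A: "A \<in> events" and p: "0 < prob A" "prob A < 1" and C: "C \<in> events"
  shows "prob C = prob A * measure (uniform_measure M A) C
                  + (1 - prob A) * measure (uniform_measure M (space M - A)) C"
proof -
  have Ac: "space M - A \<in> events" and p_Ac: "prob (space M - A) = 1 - prob A"
    using A by (auto simp: prob_compl)
  have "(A \<inter> C) \<union> ((space M - A) \<inter> C) = C" using sets.sets_into_space[OF C] by auto
  moreover have "prob ((A \<inter> C) \<union> ((space M - A) \<inter> C)) = prob (A \<inter> C) + prob ((space M - A) \<inter> C)"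
    using A C by (intro finite_measure_Union) auto
  ultimately have "prob C = prob (A \<inter> C) + prob ((space M - A) \<inter> C)" by simp
  moreover have "measure (uniform_measure M A) C = prob (A \<inter> C) / prob A"
    using p A C by (simp add: emeasure_eq_measure)
  moreover have "measure (uniform_measure M (space M - A)) C = prob ((space M - A) \<inter> C) / (1 - prob A)"
    using p p_Ac Ac C by (simp add: emeasure_eq_measure)
  ultimately show ?thesis using p by simp
qed

text \<open>Hence an extremal \<mu> gives every tail event probability 0 or 1: otherwise \<mu>
  would be the proper convex combination of its conditionings on A and on the
  complement of A, both in G(\<gamma>), and extremality would force \<mu>(A) = 1.\<close>
lemma extremal_tail_trivial:
  assumes pos: "POS M \<gamma>" and ext: "extremal_Gibbs M \<gamma> \<mu>" and tb: "\<And>n. time_box (Lam n)"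
    and inc: "incseq Lam" and cover: "(\<Union>n. Lam n) = UNIV"
    and tail: "tail_event M Lam A"
  shows "measure \<mu> A = 0 \<or> measure \<mu> A = 1"
proof (rule ccontr)
  assume nontrivial: "\<not> (measure \<mu> A = 0 \<or> measure \<mu> A = 1)"
  have g: "Gibbs M \<gamma> \<mu>" using ext unfolding extremal_Gibbs_def by auto
  have sets_mu: "sets \<mu> = sets (Conf M)" and "prob_space \<mu>" using g unfolding Gibbs_def by auto
  interpret pm: prob_space \<mu> by fact
  have space_mu: "space \<mu> = space (Conf M)" using sets_eq_imp_space_eq[OF sets_mu] .
  have A: "A \<in> sets \<mu>" using tail_event_sets[OF tail] sets_mu by simp
  have p: "0 < measure \<mu> A" "measure \<mu> A < 1"
    using nontrivial pm.prob_le_1[of A] measure_nonneg[of \<mu> A] by linarith+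
  have p_Ac: "measure \<mu> (space (Conf M) - A) = 1 - measure \<mu> A"
    unfolding space_mu[symmetric] using A by (rule pm.prob_compl)
  have G_A: "Gibbs M \<gamma> (uniform_measure \<mu> A)"
    using Gibbs_conditioned_on_tail_event[OF pos g tb inc cover tail] p by auto
  have G_Ac: "Gibbs M \<gamma> (uniform_measure \<mu> (space \<mu> - A))"
    using Gibbs_conditioned_on_tail_event[OF pos g tb inc cover tail_event_compl[OF tail]] p p_Ac
    unfolding space_mu by auto
  have "\<forall>C \<in> sets (Conf M). measure (uniform_measure \<mu> A) C = measure \<mu> C"
    using ext G_A G_Ac p pm.uniform_measure_mixture[OF A p] sets_mu
    unfolding extremal_Gibbs_def by blast
  then have "measure (uniform_measure \<mu> A) A = measure \<mu> A"
    using A sets_mu by simp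
  moreover have "measure (uniform_measure \<mu> A) A = 1"
    using p A by (simp add: pm.emeasure_eq_measure)
  ultimately show False using p by simp
qed

text \<open>Shifted so that Lam n contains the support D of h, the kernel integrals of h form
  a bounded reverse martingale for the decreasing boundary sigma-algebras, whose
  intersection is contained in the tail and hence trivial under an extremal \<mu>.\<close>
lemma kernels_converge_local:
  fixes h :: "('s::order \<Rightarrow> 'e) \<Rightarrow> real"
  assumes pos: "POS M \<gamma>" and ext: "extremal_Gibbs M \<gamma> \<mu>" and tb: "\<And>n. time_box (Lam n)"
    and inc: "incseq Lam" and cover: "(\<Union>n. Lam n) = UNIV"
    and local: "local_fun M h" and bounded: "bounded_fun M h"
  shows "AE \<omega> in \<mu>. (\<lambda>n. \<integral>\<sigma>. h \<sigma> \<partial>(\<gamma> (Lam n) \<omega>)) \<longlonglongrightarrow> (\<integral>\<sigma>. h \<sigma> \<partial>\<mu>)"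
proof -
  have g: "Gibbs M \<gamma> \<mu>" using ext unfolding extremal_Gibbs_def by auto
  have prob_mu: "prob_space \<mu>" and sets_mu: "sets \<mu> = sets (Conf M)" using g unfolding Gibbs_def by auto
  have space_mu: "space \<mu> = space (Conf M)" using sets_eq_imp_space_eq[OF sets_mu] .
  obtain D where D: "finite D" "h \<in> borel_measurable (Fsub M D)" using local unfolding local_fun_def by auto
  obtain B where hB: "\<And>\<omega>. \<omega> \<in> space (Conf M) \<Longrightarrow> \<bar>h \<omega>\<bar> \<le> B" using bounded unfolding bounded_fun_def by auto
  obtain n0 where n0: "\<forall>n\<ge>n0. D \<subseteq> Lam n" using finite_subset_eventually[OF D(1) inc cover] by auto
  define L where "L n = Lam (n + n0)" for n
  define F where "F n = Fsub M (past (L n) \<union> outer (L n))" for n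
  define X where "X n \<omega> = (\<integral>\<sigma>. h \<sigma> \<partial>\<gamma> (L n) \<omega>)" for n \<omega>
  have tb_L: "time_box (L n)" for n unfolding L_def by (rule tb)
  have L_mono: "n \<le> m \<Longrightarrow> L n \<subseteq> L m" for n m using inc unfolding L_def incseq_def by auto
  have h_nonfuture: "h \<in> borel_measurable (Fsub M (- future (L n)))" for n
  proof (rule measurable_Fsub_mono[OF _ D(2)])
    show "D \<subseteq> - future (L n)" using n0 unfolding L_def by (intro subset_not_future) simp
  qed
  interpret k: invariant_kernel M "L n" "\<gamma> (L n)" \<mu> for n by (rule invariant_kernel_of_Gibbs[OF pos g tb_L])
  interpret martingale: bounded_reverse_martingale \<mu> F X h B
  proof (rule bounded_reverse_martingale.intro[OF prob_mu], unfold_locales)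
    show "subalgebra \<mu> (F n)" for n unfolding F_def by (rule k.subalgebra_mu)
    show "sets (F m) \<subseteq> sets (F n)" if "n \<le> m" for n m
      unfolding F_def by (rule sets_Fsub_mono[OF past_outer_antimono[OF tb_L L_mono[OF that]]])
    show "X n \<in> borel_measurable (F n)" for n unfolding X_def F_def by (rule k.kernel_integral_measurable[OF h_nonfuture])
    show "\<bar>X n \<omega>\<bar> \<le> B" if "\<omega> \<in> space \<mu>" for n \<omega>
      unfolding X_def using k.kernel_integral_bounded[OF h_nonfuture hB] that space_mu by auto
    show "(\<integral>\<omega>. f \<omega> * X n \<omega> \<partial>\<mu>) = (\<integral>\<omega>. f \<omega> * h \<omega> \<partial>\<mu>)"
      if "f \<in> borel_measurable (F n)" "\<And>\<omega>. \<omega> \<in> space \<mu> \<Longrightarrow> \<bar>f \<omega>\<bar> \<le> C" for n f C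
      unfolding X_def using k.kernel_cond_exp[OF h_nonfuture hB, of f n C] that space_mu unfolding F_def by auto
    show "measure \<mu> A = 0 \<or> measure \<mu> A = 1" if "\<And>n. A \<in> sets (F n)" for A
    proof (rule extremal_tail_trivial[OF pos ext tb inc cover], unfold tail_event_def, intro allI)
      fix n
      have "Lam n \<subseteq> L n" using inc unfolding L_def incseq_def by auto
      then show "A \<in> sets (Fsub M (past (Lam n) \<union> outer (Lam n)))"
        using that[of n] sets_Fsub_mono[OF past_outer_antimono[OF tb_L]] unfolding F_def by blast
    qed
  qed
  show ?thesis using martingale.AE_tendsto_mean
  proof eventually_elim
    case (elim \<omega>)
    then show ?case unfolding X_def L_def by (rule LIMSEQ_offset)
  qed
qed

lemma integral_uniform_approx:
  fixes f g :: "_ \<Rightarrow> real"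
  assumes "prob_space \<nu>" "f \<in> borel_measurable \<nu>" "g \<in> borel_measurable \<nu>"
    and close: "\<And>x. x \<in> space \<nu> \<Longrightarrow> \<bar>f x - g x\<bar> \<le> c" and bounded: "\<And>x. x \<in> space \<nu> \<Longrightarrow> \<bar>g x\<bar> \<le> B"
  shows "\<bar>(\<integral>x. f x \<partial>\<nu>) - (\<integral>x. g x \<partial>\<nu>)\<bar> \<le> c"
proof -
  interpret prob_space \<nu> by fact
  have int_g: "integrable \<nu> g"
    using assms(3) bounded by (intro integrable_const_bound[where B=B] AE_I2) auto
  have int_f: "integrable \<nu> f"
    using assms(2) close bounded by (intro integrable_const_bound[where B="B+c"] AE_I2) (smt (verit) real_norm_def)
  have "\<bar>(\<integral>x. f x \<partial>\<nu>) - (\<integral>x. g x \<partial>\<nu>)\<bar> = \<bar>\<integral>x. f x - g x \<partial>\<nu>\<bar>"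
    using int_f int_g by simp
  also have "\<dots> \<le> (\<integral>x. \<bar>f x - g x\<bar> \<partial>\<nu>)" by (rule integral_abs_bound)
  also have "\<dots> \<le> c"
    using close int_f int_g by (intro integral_le_const AE_I2) auto
  finally show ?thesis .
qed

lemma tendsto_integral_uniform_approx:
  fixes h :: "'a \<Rightarrow> real" and \<nu> :: "nat \<Rightarrow> 'a measure"
  assumes \<nu>: "\<And>n. prob_space (\<nu> n)" "\<And>n. space (\<nu> n) = \<Omega>"
    and \<nu>0: "prob_space \<nu>0" "space \<nu>0 = \<Omega>" "h \<in> borel_measurable \<nu>0"
    and h_meas: "\<forall>\<^sub>F n in sequentially. h \<in> borel_measurable (\<nu> n)"
    and approx: "\<And>\<epsilon>. 0 < \<epsilon> \<Longrightarrow> \<exists>g B. (\<forall>x\<in>\<Omega>. \<bar>h x - g x\<bar> \<le> \<epsilon> \<and> \<bar>g x\<bar> \<le> B) \<and>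
        g \<in> borel_measurable \<nu>0 \<and> (\<forall>\<^sub>F n in sequentially. g \<in> borel_measurable (\<nu> n)) \<and>
        (\<lambda>n. \<integral>x. g x \<partial>\<nu> n) \<longlonglongrightarrow> (\<integral>x. g x \<partial>\<nu>0)"
  shows "(\<lambda>n. \<integral>x. h x \<partial>\<nu> n) \<longlonglongrightarrow> (\<integral>x. h x \<partial>\<nu>0)"
proof (rule tendstoI)
  fix \<epsilon> :: real assume "0 < \<epsilon>"
  then obtain g B where g: "\<And>x. x \<in> \<Omega> \<Longrightarrow> \<bar>h x - g x\<bar> \<le> \<epsilon>/3 \<and> \<bar>g x\<bar> \<le> B"
    and g0: "g \<in> borel_measurable \<nu>0" and g_meas: "\<forall>\<^sub>F n in sequentially. g \<in> borel_measurable (\<nu> n)"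
    and g_lim: "(\<lambda>n. \<integral>x. g x \<partial>\<nu> n) \<longlonglongrightarrow> (\<integral>x. g x \<partial>\<nu>0)"
    using approx[of "\<epsilon>/3"] by auto
  have near0: "\<bar>(\<integral>x. h x \<partial>\<nu>0) - (\<integral>x. g x \<partial>\<nu>0)\<bar> \<le> \<epsilon>/3"
    using \<nu>0 g g0 by (intro integral_uniform_approx[where B=B]) auto
  have "\<forall>\<^sub>F n in sequentially. dist (\<integral>x. g x \<partial>\<nu> n) (\<integral>x. g x \<partial>\<nu>0) < \<epsilon>/3"
    using g_lim \<open>0 < \<epsilon>\<close> by (intro tendstoD) auto
  with h_meas g_meas show "\<forall>\<^sub>F n in sequentially. dist (\<integral>x. h x \<partial>\<nu> n) (\<integral>x. h x \<partial>\<nu>0) < \<epsilon>"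
  proof eventually_elim
    case (elim n)
    have "\<bar>(\<integral>x. h x \<partial>\<nu> n) - (\<integral>x. g x \<partial>\<nu> n)\<bar> \<le> \<epsilon>/3"
      using \<nu> g elim by (intro integral_uniform_approx[where B=B]) auto
    with near0 elim(3) show ?case unfolding dist_real_def by linarith
  qed
qed

section \<open>Continuous local functions over a compact metric state space\<close>

lemma topspace_product_Conf:
  "mspace m = space M \<Longrightarrow> topspace (product_topology (\<lambda>_::'s. mtopology_of m) UNIV) = space (Conf M)"
  by (simp add: space_Conf)

text \<open>A continuous F_D-measurable function is continuous with respect to the
  coordinates in D alone: near a configuration \<omega>0 it varies little as soon as the
  D-coordinates are close.  (Modify \<sigma> outside D to agree with \<omega>0 and use a basic
  open neighbourhood of \<omega>0, which only restricts finitely many coordinates.)\<close>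
lemma continuous_local_fun_at:
  fixes m :: "'e metric" and h :: "('s \<Rightarrow> 'e) \<Rightarrow> real"
  assumes sp: "mspace m = space M" and hm: "h \<in> borel_measurable (Fsub M D)" and fD: "finite D"
    and hc: "continuous_map (product_topology (\<lambda>_::'s. mtopology_of m) UNIV) euclideanreal h"
    and e: "0 < \<epsilon>" and \<omega>0: "\<omega>0 \<in> space (Conf M)"
  shows "\<exists>\<rho>>0. \<forall>\<sigma>\<in>space (Conf M). (\<forall>x\<in>D. mdist m (\<omega>0 x) (\<sigma> x) < \<rho>) \<longrightarrow> \<bar>h \<sigma> - h \<omega>0\<bar> < \<epsilon>"
proof -
  interpret MS: Metric_space "mspace m" "mdist m" by simp
  have mt: "mtopology_of m = MS.mtopology" unfolding mtopology_of_def by simp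
  define T where "T = product_topology (\<lambda>_::'s. mtopology_of m) UNIV"
  have tsT: "topspace T = space (Conf M)" unfolding T_def using topspace_product_Conf[OF sp] .
  have in_E: "\<sigma> x \<in> mspace m" if "\<sigma> \<in> space (Conf M)" for \<sigma> :: "'s \<Rightarrow> 'e" and x
    using that sp unfolding space_Conf by auto
  define V where "V = {\<sigma> \<in> topspace T. h \<sigma> \<in> ball (h \<omega>0) \<epsilon>}"
  have "openin T V" unfolding V_def T_def by (rule openin_continuous_map_preimage[OF hc]) simp
  moreover have "\<omega>0 \<in> V" unfolding V_def using \<omega>0 tsT e by simp
  ultimately obtain U where U: "\<forall>i\<in>UNIV. openin (mtopology_of m) (U i)" "\<omega>0 \<in> Pi\<^sub>E UNIV U" "Pi\<^sub>E UNIV U \<subseteq> V"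
    unfolding T_def openin_product_topology_alt by blast
  have "\<forall>x\<in>D. \<exists>r>0. MS.mball (\<omega>0 x) r \<subseteq> U x"
    using U(1,2) unfolding mt MS.openin_mtopology by (auto simp: PiE_iff)
  then obtain r where r: "\<forall>x\<in>D. 0 < r x \<and> MS.mball (\<omega>0 x) (r x) \<subseteq> U x" by metis
  define \<rho> where "\<rho> = Min (insert 1 (r ` D))"
  have \<rho>: "0 < \<rho>" "\<And>x. x \<in> D \<Longrightarrow> \<rho> \<le> r x"
    unfolding \<rho>_def using fD r by auto
  show ?thesis
  proof (intro exI conjI ballI impI)
    fix \<sigma> assume \<sigma>: "\<sigma> \<in> space (Conf M)" and close: "\<forall>x\<in>D. mdist m (\<omega>0 x) (\<sigma> x) < \<rho>"
    define \<sigma>' where "\<sigma>' x = (if x \<in> D then \<sigma> x else \<omega>0 x)" for x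
    have "\<sigma>' x \<in> U x" for x
    proof (cases "x \<in> D")
      case True
      then have "\<sigma> x \<in> MS.mball (\<omega>0 x) (r x)"
        using in_E[OF \<sigma>] in_E[OF \<omega>0] close \<rho>(2)[OF True] by fastforce
      moreover have "MS.mball (\<omega>0 x) (r x) \<subseteq> U x" using r True by blast
      ultimately show ?thesis using True unfolding \<sigma>'_def by (metis subsetD)
    qed (use U(2) \<sigma>'_def in auto)
    then have "\<sigma>' \<in> V" using U(3) by auto
    then have "\<bar>h \<sigma>' - h \<omega>0\<bar> < \<epsilon>" unfolding V_def by (simp add: dist_real_def abs_minus_commute)
    moreover have "\<sigma>' \<in> space (Conf M)" using \<sigma> \<omega>0 unfolding \<sigma>'_def space_Conf by (auto simp: PiE_iff)
    then have "h \<sigma>' = h \<sigma>" using Fsub_measurable_depends_on[OF hm _ \<sigma>] unfolding \<sigma>'_def by auto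
    ultimately show "\<bar>h \<sigma> - h \<omega>0\<bar> < \<epsilon>" by simp
  qed (rule \<rho>(1))
qed

lemma openin_coordinate_balls:
  fixes m :: "'e metric"
  assumes "finite D" "\<And>x. x \<in> D \<Longrightarrow> q x \<in> mspace m"
  shows "openin (product_topology (\<lambda>_::'s. mtopology_of m) UNIV)
           {\<sigma> \<in> topspace (product_topology (\<lambda>_::'s. mtopology_of m) UNIV). \<forall>x\<in>D. mdist m (q x) (\<sigma> x) < r}"
    (is "openin ?T ?B")
proof -
  interpret MS: Metric_space "mspace m" "mdist m" by simp
  have "?B = (\<Inter>x\<in>D. {\<sigma> \<in> topspace ?T. \<sigma> x \<in> MS.mball (q x) r}) \<inter> topspace ?T"
    using assms(2) by auto
  also have "openin ?T \<dots>"
    using assms(1) MS.openin_mball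
    by (intro openin_INT openin_continuous_map_preimage[OF continuous_map_product_projection])
       (auto simp: mtopology_of_def)
  finally show ?thesis .
qed

lemma finite_coordinate_ball_cover:
  fixes m :: "'e metric" and R :: "('s \<Rightarrow> 'e) \<Rightarrow> real"
  assumes sp: "mspace m = space M" and cp: "compact_space (mtopology_of m)" and fD: "finite D"
    and R: "\<And>q. q \<in> space (Conf M) \<Longrightarrow> 0 < R q"
  shows "\<exists>Q. finite Q \<and> Q \<subseteq> space (Conf M) \<and>
           (\<forall>\<sigma>\<in>space (Conf M). \<exists>q\<in>Q. \<forall>x\<in>D. mdist m (q x) (\<sigma> x) < R q)"
proof -
  define T where "T = product_topology (\<lambda>_::'s. mtopology_of m) UNIV"
  have tsT: "topspace T = space (Conf M)" unfolding T_def using topspace_product_Conf[OF sp] .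
  have in_E: "\<sigma> x \<in> mspace m" if "\<sigma> \<in> space (Conf M)" for \<sigma> :: "'s \<Rightarrow> 'e" and x
    using that sp unfolding space_Conf by auto
  define Ob where "Ob q = {\<sigma>\<in>topspace T. \<forall>x\<in>D. mdist m (q x) (\<sigma> x) < R q}" for q
  have "compact_space T" unfolding T_def using cp by (simp add: compact_space_product_topology)
  moreover have "\<forall>U\<in>Ob ` space (Conf M). openin T U"
  proof
    fix U assume "U \<in> Ob ` space (Conf M)"
    then obtain q where q: "q \<in> space (Conf M)" and U: "U = Ob q" by auto
    show "openin T U"
      unfolding U Ob_def T_def by (intro openin_coordinate_balls[OF fD] in_E[OF q])
  qed
  moreover have "topspace T \<subseteq> \<Union>(Ob ` space (Conf M))"
  proof
    fix \<sigma> assume "\<sigma> \<in> topspace T"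
    then have \<sigma>: "\<sigma> \<in> space (Conf M)" using tsT by simp
    have "mdist m (\<sigma> x) (\<sigma> x) = 0" for x using in_E[OF \<sigma>] by simp
    then have "\<sigma> \<in> Ob \<sigma>" unfolding Ob_def using \<sigma> tsT R[OF \<sigma>] by simp
    then show "\<sigma> \<in> \<Union>(Ob ` space (Conf M))" using \<sigma> by blast
  qed
  ultimately obtain Q where Q: "Q \<subseteq> space (Conf M)" "finite Q" "topspace T \<subseteq> \<Union>(Ob ` Q)"
    unfolding compact_space_alt by (metis finite_subset_image)
  show ?thesis
  proof (intro exI conjI ballI)
    fix \<sigma> :: "'s \<Rightarrow> 'e" assume "\<sigma> \<in> space (Conf M)"
    then obtain q where "q \<in> Q" "\<sigma> \<in> Ob q" using Q(3) tsT by blast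
    then show "\<exists>q\<in>Q. \<forall>x\<in>D. mdist m (q x) (\<sigma> x) < R q" unfolding Ob_def by blast
  qed (use Q in auto)
qed

text \<open>Hence the continuity of a continuous local function is uniform in the
  D-coordinates: take the radii of local continuity at \<epsilon>/2, halve them, and use the
  triangle inequality through a centre of the finite cover.\<close>
lemma uniformly_continuous_local_fun:
  fixes m :: "'e metric" and h :: "('s \<Rightarrow> 'e) \<Rightarrow> real"
  assumes sp: "mspace m = space M" and cp: "compact_space (mtopology_of m)"
    and hm: "h \<in> borel_measurable (Fsub M D)" and fD: "finite D"
    and hc: "continuous_map (product_topology (\<lambda>_::'s. mtopology_of m) UNIV) euclideanreal h"
    and e: "0 < \<epsilon>"
  shows "\<exists>\<delta>>0. \<forall>\<sigma>\<in>space (Conf M). \<forall>\<tau>\<in>space (Conf M).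
           (\<forall>x\<in>D. mdist m (\<sigma> x) (\<tau> x) < \<delta>) \<longrightarrow> \<bar>h \<sigma> - h \<tau>\<bar> < \<epsilon>"
proof -
  have in_E: "\<sigma> x \<in> mspace m" if "\<sigma> \<in> space (Conf M)" for \<sigma> :: "'s \<Rightarrow> 'e" and x
    using that sp unfolding space_Conf by auto
  have "\<forall>q\<in>space (Conf M). \<exists>\<rho>>0. \<forall>\<sigma>\<in>space (Conf M).
      (\<forall>x\<in>D. mdist m (q x) (\<sigma> x) < \<rho>) \<longrightarrow> \<bar>h \<sigma> - h q\<bar> < \<epsilon>/2"
    using continuous_local_fun_at[OF sp hm fD hc, of "\<epsilon>/2"] e by simp
  then obtain R where R: "\<And>q. q \<in> space (Conf M) \<Longrightarrow> 0 < R q \<and>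
      (\<forall>\<sigma>\<in>space (Conf M). (\<forall>x\<in>D. mdist m (q x) (\<sigma> x) < R q) \<longrightarrow> \<bar>h \<sigma> - h q\<bar> < \<epsilon>/2)"
    by metis
  obtain Q where Q: "finite Q" "Q \<subseteq> space (Conf M)"
    and cover: "\<forall>\<sigma>\<in>space (Conf M). \<exists>q\<in>Q. \<forall>x\<in>D. mdist m (q x) (\<sigma> x) < R q / 2"
    using finite_coordinate_ball_cover[OF sp cp fD, of "\<lambda>q. R q / 2"] R by auto
  define \<delta> where "\<delta> = Min (insert 1 (R ` Q)) / 2"
  have "Min (insert 1 (R ` Q)) \<le> R q" if "q \<in> Q" for q
    using Q(1) that by (intro Min_le) auto
  moreover have "0 < Min (insert 1 (R ` Q))" using Q R by auto
  ultimately have \<delta>: "0 < \<delta>" "\<And>q. q \<in> Q \<Longrightarrow> \<delta> \<le> R q / 2"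
    unfolding \<delta>_def by auto
  show ?thesis
  proof (intro exI conjI ballI impI)
    fix \<sigma> \<tau> assume \<sigma>: "\<sigma> \<in> space (Conf M)" and \<tau>: "\<tau> \<in> space (Conf M)"
      and close: "\<forall>x\<in>D. mdist m (\<sigma> x) (\<tau> x) < \<delta>"
    obtain q where q: "q \<in> Q" "\<forall>x\<in>D. mdist m (q x) (\<sigma> x) < R q / 2" using cover \<sigma> by blast
    have qs: "q \<in> space (Conf M)" using q(1) Q(2) by auto
    have "mdist m (q x) (\<tau> x) < R q" if x: "x \<in> D" for x
    proof -
      have "mdist m (q x) (\<tau> x) \<le> mdist m (q x) (\<sigma> x) + mdist m (\<sigma> x) (\<tau> x)"
        using in_E[OF qs] in_E[OF \<sigma>] in_E[OF \<tau>] by (rule mdist_triangle)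
      also have "\<dots> < R q / 2 + \<delta>" using q(2) x close by (intro add_strict_mono) auto
      also have "\<dots> \<le> R q" using \<delta>(2)[OF q(1)] by simp
      finally show ?thesis .
    qed
    moreover have "\<forall>x\<in>D. mdist m (q x) (\<sigma> x) < R q" using q(2) R[OF qs] by auto
    ultimately have "\<bar>h \<sigma> - h q\<bar> < \<epsilon>/2" "\<bar>h \<tau> - h q\<bar> < \<epsilon>/2" using R[OF qs] \<sigma> \<tau> by auto
    then show "\<bar>h \<sigma> - h \<tau>\<bar> < \<epsilon>" by linarith
  qed (rule \<delta>(1))
qed

section \<open>Cylinder step functions\<close>

definition small_partition ::
  "'e measure \<Rightarrow> 'e metric \<Rightarrow> real \<Rightarrow> nat \<Rightarrow> (nat \<Rightarrow> 'e set) \<Rightarrow> (nat \<Rightarrow> 'e) \<Rightarrow> bool" where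
  "small_partition M m r n cell cen \<longleftrightarrow>
     (\<forall>j<n. cen j \<in> space M \<and> cell j \<in> sets M \<and> (\<forall>e\<in>cell j. e \<in> space M \<and> mdist m e (cen j) < r)) \<and>
     (\<forall>e\<in>space M. \<exists>j<n. e \<in> cell j) \<and> (\<forall>i<n. \<forall>j<n. i \<noteq> j \<longrightarrow> cell i \<inter> cell j = {})"

lemma small_partition_exists:
  fixes m :: "'e metric"
  assumes sp: "mspace m = space M" and cp: "compact_space (mtopology_of m)"
    and sM: "sets M = sigma_sets (space M) {U. openin (mtopology_of m) U}" and r: "0 < r"
  shows "\<exists>n cell cen. small_partition M m r n cell cen"
proof -
  interpret MS: Metric_space "mspace m" "mdist m" by simp
  have mt: "mtopology_of m = MS.mtopology" unfolding mtopology_of_def by simp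
  have "MS.mtotally_bounded (mspace m)"
    using cp unfolding mt compact_space_def MS.topspace_mtopology by (rule MS.compactin_imp_mtotally_bounded)
  then obtain C where C: "finite C" "C \<subseteq> mspace m" "mspace m \<subseteq> (\<Union>x\<in>C. MS.mball x r)"
    using r unfolding MS.mtotally_bounded_def by meson
  obtain cs where cs: "set cs = C" using finite_list[OF C(1)] by blast
  define balls where "balls j = MS.mball (cs ! j) r" for j
  have "MS.mball c r \<in> sets M" for c
    unfolding sM by (intro sigma_sets.Basic) (simp add: mt)
  then have balls_sets: "range balls \<subseteq> sets M" unfolding balls_def by blast
  have "small_partition M m r (length cs) (disjointed balls) (\<lambda>j. cs ! j)"
    unfolding small_partition_def
  proof (intro conjI allI impI ballI)
    fix j assume "j < length cs"
    then show "cs ! j \<in> space M" using C(2) cs sp by auto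
    show "disjointed balls j \<in> sets M" using sets.range_disjointed_sets[OF balls_sets] by auto
    fix e assume "e \<in> disjointed balls j"
    then have "e \<in> MS.mball (cs ! j) r" using disjointed_subset[of balls j] unfolding balls_def by blast
    then have "e \<in> mspace m \<and> mdist m e (cs ! j) < r" by (auto simp: MS.commute)
    then show "e \<in> space M" "mdist m e (cs ! j) < r" using sp by auto
  next
    fix e assume "e \<in> space M"
    then obtain c where "c \<in> C" "e \<in> MS.mball c r" using C(3) sp by blast
    moreover obtain j where "j < length cs" "cs ! j = c" using cs \<open>c \<in> C\<close> by (metis in_set_conv_nth)
    ultimately have "e \<in> (\<Union>j\<in>{0..<length cs}. balls j)" unfolding balls_def by auto
    then have "e \<in> (\<Union>j\<in>{0..<length cs}. disjointed balls j)" by (simp only: finite_UN_disjointed_eq)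
    then show "\<exists>j<length cs. e \<in> disjointed balls j" by auto
  next
    fix i j :: nat assume "i \<noteq> j"
    then show "disjointed balls i \<inter> disjointed balls j = {}"
      using disjoint_family_disjointed[of balls] unfolding disjoint_family_on_def by blast
  qed
  then show ?thesis by blast
qed

definition cylinder :: "'e measure \<Rightarrow> (nat \<Rightarrow> 'e set) \<Rightarrow> 's set \<Rightarrow> ('s \<Rightarrow> nat) \<Rightarrow> ('s \<Rightarrow> 'e) set" where
  "cylinder M cell D \<phi> = {\<omega>\<in>space (Conf M). \<forall>x\<in>D. \<omega> x \<in> cell (\<phi> x)}"

lemma cylinder_sets:
  assumes "finite D" "\<And>x. x \<in> D \<Longrightarrow> cell (\<phi> x) \<in> sets M"
  shows "cylinder M cell D \<phi> \<in> sets (Fsub M D)"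
proof -
  have coord: "(\<lambda>\<omega>. \<omega> x) -` cell (\<phi> x) \<inter> space (Conf M) \<in> sets (Fsub M D)" if "x \<in> D" for x
    unfolding sets_Fsub coord_gens_def using that assms(2)[OF that] by (intro sigma_sets.Basic) blast
  show ?thesis
  proof (cases "D = {}")
    case True
    then have "cylinder M cell D \<phi> = space (Fsub M D)" unfolding cylinder_def by simp
    then show ?thesis using sets.top[of "Fsub M D"] by simp
  next
    case False
    have "cylinder M cell D \<phi> = (\<Inter>x\<in>D. (\<lambda>\<omega>. \<omega> x) -` cell (\<phi> x) \<inter> space (Conf M))"
      unfolding cylinder_def using False by auto
    also have "\<dots> \<in> sets (Fsub M D)"
      using assms(1) False coord by (intro sets.finite_INT) auto
    finally show ?thesis .
  qed
qed

lemma cylinder_in_sets: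
  assumes "small_partition M m r n cell cen" "finite D" "sets (Fsub M D) \<subseteq> sets \<nu>"
    and "\<phi> \<in> Pi\<^sub>E D (\<lambda>_. {..<n})"
  shows "cylinder M cell D \<phi> \<in> sets \<nu>"
  using assms by (intro subsetD[OF assms(3)] cylinder_sets) (auto simp: small_partition_def)

lemma cylinder_index:
  assumes part: "small_partition M m r n cell cen" and \<sigma>: "\<sigma> \<in> space (Conf M)"
  obtains \<phi> where "\<phi> \<in> Pi\<^sub>E D (\<lambda>_. {..<n})" "\<sigma> \<in> cylinder M cell D \<phi>"
    "\<And>\<psi>. \<psi> \<in> Pi\<^sub>E D (\<lambda>_. {..<n}) \<Longrightarrow> \<sigma> \<in> cylinder M cell D \<psi> \<Longrightarrow> \<psi> = \<phi>"
proof -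
  have "\<sigma> x \<in> space M" for x using \<sigma> by (auto simp: space_Conf)
  then have "\<forall>x\<in>D. \<exists>j<n. \<sigma> x \<in> cell j"
    using part unfolding small_partition_def by blast
  then obtain \<phi> where \<phi>: "\<And>x. x \<in> D \<Longrightarrow> \<phi> x < n \<and> \<sigma> x \<in> cell (\<phi> x)" by metis
  define \<phi>' where "\<phi>' = restrict \<phi> D"
  show thesis
  proof (rule that)
    show "\<phi>' \<in> Pi\<^sub>E D (\<lambda>_. {..<n})" "\<sigma> \<in> cylinder M cell D \<phi>'"
      using \<phi> \<sigma> unfolding \<phi>'_def cylinder_def by auto
    fix \<psi> assume \<psi>: "\<psi> \<in> Pi\<^sub>E D (\<lambda>_. {..<n})" "\<sigma> \<in> cylinder M cell D \<psi>"
    have "\<psi> x = \<phi>' x" if x: "x \<in> D" for x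
    proof (rule ccontr)
      assume "\<psi> x \<noteq> \<phi>' x"
      moreover have "\<psi> x < n" "\<sigma> x \<in> cell (\<psi> x)" using \<psi> x by (auto simp: cylinder_def)
      ultimately have "cell (\<psi> x) \<inter> cell (\<phi> x) = {}"
        using part \<phi>[OF x] x unfolding small_partition_def \<phi>'_def by auto
      with \<open>\<sigma> x \<in> cell (\<psi> x)\<close> have "\<sigma> x \<notin> cell (\<phi> x)" by blast
      then show False using \<phi>[OF x] by blast
    qed
    then show "\<psi> = \<phi>'" using \<psi>(1) unfolding \<phi>'_def by (auto simp: PiE_iff extensional_def)
  qed
qed

lemma cylinder_combination_eval:
  assumes part: "small_partition M m r n cell cen" and fD: "finite D" and \<sigma>: "\<sigma> \<in> space (Conf M)"
  obtains \<phi> where "\<phi> \<in> Pi\<^sub>E D (\<lambda>_. {..<n})" "\<sigma> \<in> cylinder M cell D \<phi>"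
    "(\<Sum>\<psi>\<in>Pi\<^sub>E D (\<lambda>_. {..<n}). c \<psi> * indicator (cylinder M cell D \<psi>) \<sigma>) = (c \<phi> :: real)"
proof -
  obtain \<phi> where \<phi>: "\<phi> \<in> Pi\<^sub>E D (\<lambda>_. {..<n})" "\<sigma> \<in> cylinder M cell D \<phi>"
    and unique: "\<And>\<psi>. \<psi> \<in> Pi\<^sub>E D (\<lambda>_. {..<n}) \<Longrightarrow> \<sigma> \<in> cylinder M cell D \<psi> \<Longrightarrow> \<psi> = \<phi>"
    using cylinder_index[OF part \<sigma>] by blast
  have "c \<psi> * indicator (cylinder M cell D \<psi>) \<sigma> = (if \<psi> = \<phi> then c \<phi> else 0)"
    if "\<psi> \<in> Pi\<^sub>E D (\<lambda>_. {..<n})" for \<psi>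
    using \<phi>(2) unique[OF that] by (cases "\<psi> = \<phi>") (auto simp: indicator_def)
  then have "(\<Sum>\<psi>\<in>Pi\<^sub>E D (\<lambda>_. {..<n}). c \<psi> * indicator (cylinder M cell D \<psi>) \<sigma>)
      = (\<Sum>\<psi>\<in>Pi\<^sub>E D (\<lambda>_. {..<n}). if \<psi> = \<phi> then c \<phi> else 0)"
    by (rule sum.cong[OF refl])
  also have "\<dots> = c \<phi>" using \<phi>(1) fD by (simp add: finite_PiE)
  finally show thesis using that \<phi> by blast
qed

text \<open>A function that varies by less than \<epsilon> when the D-coordinates move by less than
  the radius r of the partition is \<epsilon>-close to the cylinder step function taking, on
  each cylinder, the value at a configuration built from the cell centres.\<close>
definition cell_centre :: "(nat \<Rightarrow> 'e) \<Rightarrow> 's set \<Rightarrow> ('s \<Rightarrow> 'e) \<Rightarrow> ('s \<Rightarrow> nat) \<Rightarrow> 's \<Rightarrow> 'e" where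
  "cell_centre cen D \<omega>1 \<phi> x = (if x \<in> D then cen (\<phi> x) else \<omega>1 x)"

lemma cylinder_step_approx:
  fixes h :: "('s \<Rightarrow> 'e) \<Rightarrow> real"
  assumes part: "small_partition M m r n cell cen" and fD: "finite D" and \<omega>1: "\<omega>1 \<in> space (Conf M)"
    and oscillation: "\<And>\<sigma> \<tau>. \<sigma> \<in> space (Conf M) \<Longrightarrow> \<tau> \<in> space (Conf M) \<Longrightarrow>
        (\<forall>x\<in>D. mdist m (\<sigma> x) (\<tau> x) < r) \<Longrightarrow> \<bar>h \<sigma> - h \<tau>\<bar> < \<epsilon>"
    and \<sigma>: "\<sigma> \<in> space (Conf M)"
  shows "\<bar>h \<sigma> - (\<Sum>\<phi>\<in>Pi\<^sub>E D (\<lambda>_. {..<n}). h (cell_centre cen D \<omega>1 \<phi>) * indicator (cylinder M cell D \<phi>) \<sigma>)\<bar> < \<epsilon>"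
proof -
  obtain \<phi> where \<phi>: "\<phi> \<in> Pi\<^sub>E D (\<lambda>_. {..<n})" "\<sigma> \<in> cylinder M cell D \<phi>"
    and eval: "(\<Sum>\<psi>\<in>Pi\<^sub>E D (\<lambda>_. {..<n}). h (cell_centre cen D \<omega>1 \<psi>) * indicator (cylinder M cell D \<psi>) \<sigma>)
                 = h (cell_centre cen D \<omega>1 \<phi>)"
    by (rule cylinder_combination_eval[OF part fD \<sigma>])
  have "cell_centre cen D \<omega>1 \<phi> \<in> space (Conf M)"
    using part \<phi>(1) \<omega>1 unfolding small_partition_def cell_centre_def space_Conf by (auto simp: PiE_iff)
  moreover have "\<forall>x\<in>D. mdist m (\<sigma> x) (cell_centre cen D \<omega>1 \<phi> x) < r"
    using part \<phi> unfolding small_partition_def cylinder_def cell_centre_def by (auto simp: PiE_iff)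
  ultimately show ?thesis using oscillation[OF \<sigma>] eval by simp
qed

lemma cylinder_approximation:
  fixes m :: "'e metric" and h :: "('s \<Rightarrow> 'e) \<Rightarrow> real"
  assumes part: "\<And>k. small_partition M m (1 / Suc k) (NC k) (CL k) (CN k)"
    and sp: "mspace m = space M" and cp: "compact_space (mtopology_of m)"
    and hD: "h \<in> borel_measurable (Fsub M D)" and fD: "finite D"
    and hc: "continuous_map (product_topology (\<lambda>_::'s. mtopology_of m) UNIV) euclideanreal h"
    and \<omega>1: "\<omega>1 \<in> space (Conf M)" and e: "0 < \<epsilon>"
  shows "\<exists>k. \<forall>\<sigma>\<in>space (Conf M). \<bar>h \<sigma> - (\<Sum>\<phi>\<in>Pi\<^sub>E D (\<lambda>_. {..<NC k}).
           h (cell_centre (CN k) D \<omega>1 \<phi>) * indicator (cylinder M (CL k) D \<phi>) \<sigma>)\<bar> \<le> \<epsilon>"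
proof -
  obtain \<delta> where "0 < \<delta>" and osc: "\<forall>\<sigma>\<in>space (Conf M). \<forall>\<tau>\<in>space (Conf M).
      (\<forall>x\<in>D. mdist m (\<sigma> x) (\<tau> x) < \<delta>) \<longrightarrow> \<bar>h \<sigma> - h \<tau>\<bar> < \<epsilon>"
    using uniformly_continuous_local_fun[OF sp cp hD fD hc e] by blast
  then obtain k where "inverse (Suc k) < \<delta>" using reals_Archimedean by blast
  then have k: "1 / Suc k < \<delta>" by (simp add: inverse_eq_divide)
  have osc_k: "\<bar>h \<sigma> - h \<tau>\<bar> < \<epsilon>" if "\<sigma> \<in> space (Conf M)" "\<tau> \<in> space (Conf M)"
    "\<forall>x\<in>D. mdist m (\<sigma> x) (\<tau> x) < 1 / Suc k" for \<sigma> \<tau>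
  proof -
    have "\<forall>x\<in>D. mdist m (\<sigma> x) (\<tau> x) < \<delta>" using that(3) k by (meson less_trans)
    then show ?thesis using osc that(1,2) by blast
  qed
  have "\<forall>\<sigma>\<in>space (Conf M). \<bar>h \<sigma> - (\<Sum>\<phi>\<in>Pi\<^sub>E D (\<lambda>_. {..<NC k}).
           h (cell_centre (CN k) D \<omega>1 \<phi>) * indicator (cylinder M (CL k) D \<phi>) \<sigma>)\<bar> < \<epsilon>"
    using cylinder_step_approx[where h=h, OF part[of k] fD \<omega>1 osc_k] by blast
  then show ?thesis by (blast intro: less_imp_le)
qed

lemma step_function_integral:
  fixes c :: "'b \<Rightarrow> real"
  assumes "prob_space \<nu>" "finite \<Phi>" "\<And>\<phi>. \<phi> \<in> \<Phi> \<Longrightarrow> A \<phi> \<in> sets \<nu>"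
  shows "(\<lambda>x. \<Sum>\<phi>\<in>\<Phi>. c \<phi> * indicator (A \<phi>) x) \<in> borel_measurable \<nu>"
    and "(\<integral>x. (\<Sum>\<phi>\<in>\<Phi>. c \<phi> * indicator (A \<phi>) x) \<partial>\<nu>) = (\<Sum>\<phi>\<in>\<Phi>. c \<phi> * (\<integral>x. indicator (A \<phi>) x \<partial>\<nu>))"
proof -
  interpret prob_space \<nu> by fact
  show "(\<lambda>x. \<Sum>\<phi>\<in>\<Phi>. c \<phi> * indicator (A \<phi>) x) \<in> borel_measurable \<nu>"
    using assms(3) by (intro borel_measurable_sum borel_measurable_times borel_measurable_const borel_measurable_indicator)
  have "integrable \<nu> (\<lambda>x. c \<phi> * indicator (A \<phi>) x)" if "\<phi> \<in> \<Phi>" for \<phi>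
    using assms(3)[OF that] by (intro integrable_mult_right integrable_real_indicator) (auto simp: emeasure_eq_measure)
  then show "(\<integral>x. (\<Sum>\<phi>\<in>\<Phi>. c \<phi> * indicator (A \<phi>) x) \<partial>\<nu>) = (\<Sum>\<phi>\<in>\<Phi>. c \<phi> * (\<integral>x. indicator (A \<phi>) x \<partial>\<nu>))"
    by (subst Bochner_Integration.integral_sum) auto
qed

lemma tendsto_step_function_integral:
  fixes c :: "'b \<Rightarrow> real"
  assumes \<nu>: "\<And>n. prob_space (\<nu> n)" and \<nu>0: "prob_space \<nu>0" and "finite \<Phi>"
    and sets_eventually: "\<forall>\<^sub>F n in sequentially. \<forall>\<phi>\<in>\<Phi>. A \<phi> \<in> sets (\<nu> n)"
    and sets0: "\<And>\<phi>. \<phi> \<in> \<Phi> \<Longrightarrow> A \<phi> \<in> sets \<nu>0"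
    and conv: "\<And>\<phi>. \<phi> \<in> \<Phi> \<Longrightarrow>
      (\<lambda>n. \<integral>x. (indicator (A \<phi>) x :: real) \<partial>\<nu> n) \<longlonglongrightarrow> (\<integral>x. indicator (A \<phi>) x \<partial>\<nu>0)"
  shows "(\<lambda>n. \<integral>x. (\<Sum>\<phi>\<in>\<Phi>. c \<phi> * indicator (A \<phi>) x) \<partial>\<nu> n)
           \<longlonglongrightarrow> (\<integral>x. (\<Sum>\<phi>\<in>\<Phi>. c \<phi> * indicator (A \<phi>) x) \<partial>\<nu>0)"
proof -
  have lim: "(\<lambda>n. \<Sum>\<phi>\<in>\<Phi>. c \<phi> * (\<integral>x. indicator (A \<phi>) x \<partial>\<nu> n))
          \<longlonglongrightarrow> (\<Sum>\<phi>\<in>\<Phi>. c \<phi> * (\<integral>x. indicator (A \<phi>) x \<partial>\<nu>0))"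
    using conv by (intro tendsto_sum tendsto_mult_left)
  have ev: "\<forall>\<^sub>F n in sequentially. (\<Sum>\<phi>\<in>\<Phi>. c \<phi> * (\<integral>x. indicator (A \<phi>) x \<partial>\<nu> n))
          = (\<integral>x. (\<Sum>\<phi>\<in>\<Phi>. c \<phi> * indicator (A \<phi>) x) \<partial>\<nu> n)"
    using sets_eventually
    by eventually_elim (rule step_function_integral(2)[OF \<nu> \<open>finite \<Phi>\<close>, symmetric], blast)
  have "(\<lambda>n. \<integral>x. (\<Sum>\<phi>\<in>\<Phi>. c \<phi> * indicator (A \<phi>) x) \<partial>\<nu> n)
          \<longlonglongrightarrow> (\<Sum>\<phi>\<in>\<Phi>. c \<phi> * (\<integral>x. indicator (A \<phi>) x \<partial>\<nu>0))"
    by (rule iffD1[OF tendsto_cong[OF ev] lim])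
  then show ?thesis by (simp only: step_function_integral(2)[OF \<nu>0 \<open>finite \<Phi>\<close> sets0])
qed

text \<open>Convergence on cylinder sets implies convergence of the integrals of continuous
  local functions, for any sequence of probability measures on \<Omega> that eventually
  measures every F_D with D finite: approximate uniformly by cylinder step functions.\<close>
lemma tendsto_integral_continuous_local:
  fixes m :: "'e metric" and h :: "('s \<Rightarrow> 'e) \<Rightarrow> real" and \<nu> :: "nat \<Rightarrow> ('s \<Rightarrow> 'e) measure"
    and \<omega>1 :: "'s \<Rightarrow> 'e"
  assumes part: "\<And>k. small_partition M m (1 / Suc k) (NC k) (CL k) (CN k)"
    and sp: "mspace m = space M" and cp: "compact_space (mtopology_of m)"
    and \<omega>1: "\<omega>1 \<in> space (Conf M)"
    and \<nu>: "\<And>n. prob_space (\<nu> n)" "\<And>n. space (\<nu> n) = space (Conf M)"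
    and \<nu>0: "prob_space \<nu>0" "sets \<nu>0 = sets (Conf M)"
    and sets_eventually: "\<And>D. finite D \<Longrightarrow> \<forall>\<^sub>F n in sequentially. sets (Fsub M D) \<subseteq> sets (\<nu> n)"
    and cylinder_conv: "\<And>D k \<phi>. finite D \<Longrightarrow> \<phi> \<in> Pi\<^sub>E D (\<lambda>_. {..<NC k}) \<Longrightarrow>
       (\<lambda>n. \<integral>x. (indicator (cylinder M (CL k) D \<phi>) x :: real) \<partial>\<nu> n)
         \<longlonglongrightarrow> (\<integral>x. indicator (cylinder M (CL k) D \<phi>) x \<partial>\<nu>0)"
    and local: "local_fun M h"
    and hc: "continuous_map (product_topology (\<lambda>_::'s. mtopology_of m) UNIV) euclideanreal h"
  shows "(\<lambda>n. \<integral>x. h x \<partial>\<nu> n) \<longlonglongrightarrow> (\<integral>x. h x \<partial>\<nu>0)"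
proof (rule tendsto_integral_uniform_approx[OF \<nu> \<nu>0(1)])
  obtain D where fD: "finite D" and hD: "h \<in> borel_measurable (Fsub M D)"
    using local unfolding local_fun_def by auto
  have sets0: "sets (Fsub M D) \<subseteq> sets \<nu>0" using sets_Fsub_Conf \<nu>0(2) by simp
  show "space \<nu>0 = space (Conf M)" using sets_eq_imp_space_eq[OF \<nu>0(2)] .
  show "h \<in> borel_measurable \<nu>0"
    using measurable_from_subalg[OF _ hD] sets0 \<open>space \<nu>0 = space (Conf M)\<close> by (auto simp: subalgebra_def)
  show "\<forall>\<^sub>F n in sequentially. h \<in> borel_measurable (\<nu> n)"
    using sets_eventually[OF fD] by eventually_elim (rule measurable_from_subalg[OF _ hD], auto simp: subalgebra_def \<nu>(2))
  fix \<epsilon> :: real assume "0 < \<epsilon>"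
  then obtain k where close: "\<forall>\<sigma>\<in>space (Conf M). \<bar>h \<sigma> -
      (\<Sum>\<phi>\<in>Pi\<^sub>E D (\<lambda>_. {..<NC k}). h (cell_centre (CN k) D \<omega>1 \<phi>) * indicator (cylinder M (CL k) D \<phi>) \<sigma>)\<bar> \<le> \<epsilon>"
    using cylinder_approximation[OF part sp cp hD fD hc \<omega>1] by blast
  define \<Phi> where "\<Phi> = Pi\<^sub>E D (\<lambda>_. {..<NC k})"
  define c where "c \<phi> = h (cell_centre (CN k) D \<omega>1 \<phi>)" for \<phi>
  define g where "g \<sigma> = (\<Sum>\<phi>\<in>\<Phi>. c \<phi> * indicator (cylinder M (CL k) D \<phi>) \<sigma>)" for \<sigma>
  have "finite \<Phi>" unfolding \<Phi>_def using fD by (simp add: finite_PiE)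
  have cyl_in: "cylinder M (CL k) D \<phi> \<in> sets \<nu>'" if "sets (Fsub M D) \<subseteq> sets \<nu>'" "\<phi> \<in> \<Phi>" for \<nu>' \<phi>
    using cylinder_in_sets[OF part fD] that unfolding \<Phi>_def by blast
  have cyl_eventually: "\<forall>\<^sub>F n in sequentially. \<forall>\<phi>\<in>\<Phi>. cylinder M (CL k) D \<phi> \<in> sets (\<nu> n)"
    using sets_eventually[OF fD] by eventually_elim (auto intro: cyl_in)
  show "\<exists>g B. (\<forall>x\<in>space (Conf M). \<bar>h x - g x\<bar> \<le> \<epsilon> \<and> \<bar>g x\<bar> \<le> B) \<and> g \<in> borel_measurable \<nu>0 \<and>
      (\<forall>\<^sub>F n in sequentially. g \<in> borel_measurable (\<nu> n)) \<and> (\<lambda>n. \<integral>x. g x \<partial>\<nu> n) \<longlonglongrightarrow> (\<integral>x. g x \<partial>\<nu>0)"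
  proof (intro exI conjI ballI)
    fix \<sigma> :: "'s \<Rightarrow> 'e" assume "\<sigma> \<in> space (Conf M)"
    then show "\<bar>h \<sigma> - g \<sigma>\<bar> \<le> \<epsilon>" using close unfolding g_def c_def \<Phi>_def by blast
    show "\<bar>g \<sigma>\<bar> \<le> (\<Sum>\<phi>\<in>\<Phi>. \<bar>c \<phi>\<bar>)" unfolding g_def
      by (rule order_trans[OF sum_abs sum_mono]) (auto simp: indicator_def abs_mult)
  next
    show "g \<in> borel_measurable \<nu>0"
      unfolding g_def using \<open>finite \<Phi>\<close> cyl_in[OF sets0] by (rule step_function_integral[OF \<nu>0(1)])
    show "\<forall>\<^sub>F n in sequentially. g \<in> borel_measurable (\<nu> n)"
      using cyl_eventually unfolding g_def by eventually_elim (rule step_function_integral[OF \<nu>(1) \<open>finite \<Phi>\<close>], blast)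
    show "(\<lambda>n. \<integral>x. g x \<partial>\<nu> n) \<longlonglongrightarrow> (\<integral>x. g x \<partial>\<nu>0)"
      unfolding g_def
    proof (rule tendsto_step_function_integral[OF \<nu>(1) \<nu>0(1) \<open>finite \<Phi>\<close> cyl_eventually])
      fix \<phi> assume \<phi>: "\<phi> \<in> \<Phi>"
      then show "cylinder M (CL k) D \<phi> \<in> sets \<nu>0" by (rule cyl_in[OF sets0])
      from \<phi> show "(\<lambda>n. \<integral>x. (indicator (cylinder M (CL k) D \<phi>) x :: real) \<partial>\<nu> n)
          \<longlonglongrightarrow> (\<integral>x. indicator (cylinder M (CL k) D \<phi>) x \<partial>\<nu>0)"
        unfolding \<Phi>_def by (rule cylinder_conv[OF fD])
    qed
  qed
qed

text \<open>Given partitions of E for all radii 1/(k+1), the cylinder sets over finite D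
  built from them are countably many, since S is countable; so part (i) applies to all
  their indicators at once.\<close>
lemma kernels_converge_on_cylinders:
  fixes M :: "'e measure" and \<gamma> :: "'s::order set \<Rightarrow> ('s \<Rightarrow> 'e) \<Rightarrow> ('s \<Rightarrow> 'e) measure"
  assumes S: "standing_poset TYPE('s)" and pos: "POS M \<gamma>" and ext: "extremal_Gibbs M \<gamma> \<mu>"
    and tb: "\<And>n. time_box (Lam n)" and inc: "incseq Lam" and cover: "(\<Union>n. Lam n) = UNIV"
    and part: "\<And>k. small_partition M m (1 / Suc k) (NC k) (CL k) (CN k)"
  shows "AE \<omega> in \<mu>. \<forall>D k \<phi>. finite D \<longrightarrow> \<phi> \<in> Pi\<^sub>E D (\<lambda>_. {..<NC k}) \<longrightarrow>
           (\<lambda>n. \<integral>x. (indicator (cylinder M (CL k) D \<phi>) x :: real) \<partial>\<gamma> (Lam n) \<omega>)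
             \<longlonglongrightarrow> (\<integral>x. indicator (cylinder M (CL k) D \<phi>) x \<partial>\<mu>)"
proof -
  define I where "I = (SIGMA D:{D :: 's set. finite D}. SIGMA k:(UNIV :: nat set). Pi\<^sub>E D (\<lambda>_. {..<NC k}))"
  have "countable I"
  proof -
    have "countable {D :: 's set. finite D}"
      using S countable_Collect_finite_subset[of "UNIV :: 's set"] unfolding standing_poset_def by simp
    then show ?thesis unfolding I_def
      by (intro countable_SIGMA) (auto intro!: countable_finite finite_PiE)
  qed
  moreover have "AE \<omega> in \<mu>. (\<lambda>n. \<integral>x. (indicator (cylinder M (CL k) D \<phi>) x :: real) \<partial>\<gamma> (Lam n) \<omega>)
                          \<longlonglongrightarrow> (\<integral>x. indicator (cylinder M (CL k) D \<phi>) x \<partial>\<mu>)"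
    if "finite D" "\<phi> \<in> Pi\<^sub>E D (\<lambda>_. {..<NC k})" for D k \<phi>
  proof (rule kernels_converge_local[OF pos ext tb inc cover])
    have "cylinder M (CL k) D \<phi> \<in> sets (Fsub M D)"
      using cylinder_in_sets[OF part that(1) order_refl that(2)] .
    then show "local_fun M (indicator (cylinder M (CL k) D \<phi>) :: _ \<Rightarrow> real)"
      unfolding local_fun_def using that by auto
    show "bounded_fun M (indicator (cylinder M (CL k) D \<phi>) :: _ \<Rightarrow> real)"
      unfolding bounded_fun_def by (intro exI[of _ 1]) (auto simp: indicator_def)
  qed
  ultimately have "AE \<omega> in \<mu>. \<forall>(D, k, \<phi>)\<in>I.
      (\<lambda>n. \<integral>x. (indicator (cylinder M (CL k) D \<phi>) x :: real) \<partial>\<gamma> (Lam n) \<omega>)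
        \<longlonglongrightarrow> (\<integral>x. indicator (cylinder M (CL k) D \<phi>) x \<partial>\<mu>)"
    unfolding I_def by (subst AE_ball_countable) auto
  then show ?thesis unfolding I_def by eventually_elim auto
qed

lemma kernels_converge_continuous_local:
  fixes m :: "'e metric" and M :: "'e measure" and \<gamma> :: "'s::order set \<Rightarrow> ('s \<Rightarrow> 'e) \<Rightarrow> ('s \<Rightarrow> 'e) measure"
    and \<mu> :: "('s \<Rightarrow> 'e) measure" and Lam :: "nat \<Rightarrow> 's set"
  assumes S: "standing_poset TYPE('s)" and pos: "POS M \<gamma>" and ext: "extremal_Gibbs M \<gamma> \<mu>"
    and tb: "\<And>n. time_box (Lam n)" and inc: "incseq Lam" and cover: "(\<Union>n. Lam n) = UNIV"
    and sp: "mspace m = space M" and cp: "compact_space (mtopology_of m)"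
    and sM: "sets M = sigma_sets (space M) {U. openin (mtopology_of m) U}"
  shows "AE \<omega> in \<mu>. \<forall>h. local_fun M h \<and>
               continuous_map (product_topology (\<lambda>_::'s. mtopology_of m) UNIV) euclideanreal h \<longrightarrow>
               (\<lambda>n. \<integral>\<sigma>. h \<sigma> \<partial>(\<gamma> (Lam n) \<omega>)) \<longlonglongrightarrow> (\<integral>\<sigma>. h \<sigma> \<partial>\<mu>)"
proof -
  have g: "Gibbs M \<gamma> \<mu>" using ext unfolding extremal_Gibbs_def by auto
  interpret k: invariant_kernel M "Lam n" "\<gamma> (Lam n)" \<mu> for n by (rule invariant_kernel_of_Gibbs[OF pos g tb])
  interpret pm: prob_space \<mu> by (rule k.prob_mu)
  have "\<forall>k. \<exists>n cell cen. small_partition M m (1 / Suc k) n cell cen"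
    using small_partition_exists[OF sp cp sM] by simp
  then obtain NC CL CN where part: "\<And>k. small_partition M m (1 / Suc k) (NC k) (CL k) (CN k)"
    by metis
  obtain \<omega>1 :: "'s \<Rightarrow> 'e" where \<omega>1: "\<omega>1 \<in> space (Conf M)" using pm.not_empty k.space_mu by blast
  show ?thesis using kernels_converge_on_cylinders[OF S pos ext tb inc cover part] AE_space
  proof eventually_elim
    case (elim \<omega>)
    then have \<omega>: "\<omega> \<in> space (Conf M)" using k.space_mu by simp
    have sets_eventually: "\<forall>\<^sub>F n in sequentially. sets (Fsub M D) \<subseteq> sets (\<gamma> (Lam n) \<omega>)"
      if fD: "finite D" for D
    proof -
      obtain n0 where "\<forall>n\<ge>n0. D \<subseteq> Lam n" using finite_subset_eventually[OF fD inc cover] by auto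
      then show ?thesis
        using k.K_sets[OF \<omega>] sets_Fsub_mono[OF subset_not_future] unfolding eventually_sequentially by metis
    qed
    show ?case
      using tendsto_integral_continuous_local[OF part sp cp \<omega>1 k.K_prob[OF \<omega>] k.K_space[OF \<omega>]
          k.prob_mu k.sets_mu sets_eventually] elim(1)
      by blast
  qed
qed

theorem mainTheorem6:
  fixes M :: "'e measure"
    and \<gamma> :: "'s::order set \<Rightarrow> ('s \<Rightarrow> 'e) \<Rightarrow> ('s \<Rightarrow> 'e) measure"
    and \<mu> :: "('s \<Rightarrow> 'e) measure"
    and Lam :: "nat \<Rightarrow> 's set"
  assumes S: "standing_poset TYPE('s)"
    and pos: "POS M \<gamma>"
    and ext: "extremal_Gibbs M \<gamma> \<mu>"
    and tb: "\<And>n. time_box (Lam n)"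
    and inc: "incseq Lam"
    and cover: "(\<Union>n. Lam n) = UNIV"
  shows "(\<forall>h. local_fun M h \<and> bounded_fun M h \<longrightarrow>
            (AE \<omega> in \<mu>. (\<lambda>n. \<integral>\<sigma>. h \<sigma> \<partial>(\<gamma> (Lam n) \<omega>)) \<longlonglongrightarrow> (\<integral>\<sigma>. h \<sigma> \<partial>\<mu>)))
       \<and> (\<forall>m :: 'e metric.
            mspace m = space M \<and> compact_space (mtopology_of m) \<and>
            sets M = sigma_sets (space M) {U. openin (mtopology_of m) U} \<longrightarrow>
            (AE \<omega> in \<mu>. \<forall>h. local_fun M h \<and>
               continuous_map (product_topology (\<lambda>_::'s. mtopology_of m) UNIV) euclideanreal h \<longrightarrow>
               (\<lambda>n. \<integral>\<sigma>. h \<sigma> \<partial>(\<gamma> (Lam n) \<omega>)) \<longlonglongrightarrow> (\<integral>\<sigma>. h \<sigma> \<partial>\<mu>)))"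
  using kernels_converge_local[OF pos ext tb inc cover]
    kernels_converge_continuous_local[OF S pos ext tb inc cover]
  by blast

end
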